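(* Let $(\mathcal L,\mathcal P)$ be a solution of the $N$-dcmKP hierarchy, $\phi=\sum_{n\ge0}\phi_nk^{-n}$ a dressing function for it, and $v_n(s,t)$ the coefficients of the Orlov–Schulman function $\mathcal M$. Then $$\mathcal B_n=\mathcal L^n+\frac{\partial\phi_0}{\partial t_n}-\sum_{m\ge1}\frac1m\frac{\partial v_m}{\partial t_n}\mathcal L^{-m},\qquad \log\mathcal P=N\log\mathcal L+\frac{\partial\phi_0}{\partial s}-\sum_{m\ge1}\frac1m\frac{\partial v_m}{\partial s}\mathcal L^{-m}.$$
   Context: Fix a positive integer $N$. Independent variables are $s$ (continuous), $x$ and $t=(t_1,t_2,\dots)$. Consider a formal Laurent series $\mathcal L(k;s,t)=k+\sum_{n\ge1}u_n(s,t)k^{1-n}$ and a polynomial $\mathcal P(k;s,t)=\sum_{n=0}^{N-1}p_n(s,t)k^{N-n}$ with $p_0\ne0$. The Poisson bracket is $\{f,g\}=\frac{\partial f}{\partial k}\frac{\partial g}{\partial x}-\frac{\partial f}{\partial x}\frac{\partial g}{\partial k}$; $(\mathrm{ad} f)g:=\{f,g\}$. Projections $(\cdot)_{>0}$, $(\cdot)_{\le0}$, $(\cdot)_0$ refer to powers of $k$. $\log\mathcal P:=\log p_0+N\log k+\log(1+\sum_{n=1}^{N-1}(p_n/p_0)k^{-n})$ and $N\log\mathcal L:=N\log k+N\log(\mathcal L/k)$, expanded in $k^{-1}$. The $N$-dcmKP hierarchy is $\partial_{t_n}\mathcal L=\{\mathcal B_n,\mathcal L\}$ with $\mathcal B_n:=(\mathcal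 L^n)_{>0}$, $\partial_s\mathcal L=\{\log\mathcal P,\mathcal L\}$, $\partial_{t_n}\log\mathcal P=\partial_s\mathcal B_n-\{\log\mathcal P,\mathcal B_n\}$ ($n\ge1$); $x$ and $t_1$ enter only via $x+t_1$. $\mathcal B^c_n:=-(\mathcal L^n)_{\le0}$. For series $\psi,\phi$ and a variable $u$, $\nabla_{u,\psi}\phi:=\sum_{m\ge0}\frac{1}{(m+1)!}(\mathrm{ad}\psi)^m\partial_u\phi$. A dressing function is a series $\phi=\sum_{n\ge0}\phi_n(s,t)k^{-n}$ with $\mathcal L=e^{\mathrm{ad}\phi}k$, $\nabla_{t_n,\phi}\phi=\mathcal B^c_n$, $\nabla_{s,\phi}\phi=\log\mathcal P-N\log\mathcal L$. The Orlov–Schulman function is $\mathcal M:=e^{\mathrm{ad}\phi}\bigl(\sum_{n\ge1}nt_nk^{n-1}+x+Nsk^{-1}\bigr)$, which can be written as $\mathcal M=\sum_{n\ge1}nt_n\mathcal L^{n-1}+x+Ns\mathcal L^{-1}+\sum_{n\ge1}v_n(s,t)\mathcal L^{-n-1}$; this defines the functions $v_n$. *)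

theory Defs
  imports "HOL-Analysis.Analysis"
begin

text \<open>Coefficient functions: functions of the point p :: nat => real, where
  p 0 = s, p 1 = x, p (Suc n) = t_n for n >= 1.
  Series in k with finitely many positive powers: F :: int => coef, F j = coefficient of k^j.\<close>

type_synonym coef = "(nat \<Rightarrow> real) \<Rightarrow> real"
type_synonym ser = "int \<Rightarrow> coef"

definition vs :: nat where "vs = 0"
definition vx :: nat where "vx = 1"
definition vt :: "nat \<Rightarrow> nat" where "vt n = Suc n"

definition zc :: coef where "zc = (\<lambda>p. 0)"
definition zser :: ser where "zser = (\<lambda>j. zc)"

definition pd :: "nat \<Rightarrow> coef \<Rightarrow> coef" where
  "pd i f = (\<lambda>p. deriv (\<lambda>h. f (p(i := h))) (p i))"

coinductive smooth_fn :: "coef \<Rightarrow> bool" where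
  "\<lbrakk> \<forall>i p. (\<lambda>h. f (p(i := h))) differentiable (at (p i));
     \<forall>i j p. continuous_on UNIV (\<lambda>(a, b). f (p(i := a, j := b)));
     \<forall>i. smooth_fn (pd i f) \<rbrakk> \<Longrightarrow> smooth_fn f"

text \<open>Dependence on x and t_1 only through x + t_1.\<close>
definition dep_xt :: "coef \<Rightarrow> bool" where
  "dep_xt f \<longleftrightarrow> (\<forall>p. f p = f (p(vx := 0, vt 1 := p vx + p (vt 1))))"

definition bdd_ser :: "ser \<Rightarrow> bool" where
  "bdd_ser F \<longleftrightarrow> (\<exists>D. \<forall>j>D. F j = zc)"

definition ladd :: "ser \<Rightarrow> ser \<Rightarrow> ser" where "ladd F G = (\<lambda>j p. F j p + G j p)"
definition lneg :: "ser \<Rightarrow> ser" where "lneg F = (\<lambda>j p. - F j p)"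
definition lsub :: "ser \<Rightarrow> ser \<Rightarrow> ser" where "lsub F G = (\<lambda>j p. F j p - G j p)"
definition lscal :: "coef \<Rightarrow> ser \<Rightarrow> ser" where "lscal c F = (\<lambda>j p. c p * F j p)"
definition lcst :: "coef \<Rightarrow> ser" where "lcst c = (\<lambda>j. if j = 0 then c else zc)"
definition lone :: ser where "lone = lcst (\<lambda>p. 1)"
definition kser :: ser where "kser = (\<lambda>j p. if j = 1 then 1 else 0)"
definition kshift :: "int \<Rightarrow> ser \<Rightarrow> ser" where "kshift d F = (\<lambda>j. F (j - d))"

definition lmul :: "ser \<Rightarrow> ser \<Rightarrow> ser" where
  "lmul F G = (\<lambda>j p. \<Sum>a\<in>{a. F a \<noteq> zc \<and> G (j - a) \<noteq> zc}. F a p * G (j - a) p)"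

fun lpow :: "ser \<Rightarrow> nat \<Rightarrow> ser" where
  "lpow F 0 = lone"
| "lpow F (Suc n) = lmul F (lpow F n)"

definition linv :: "ser \<Rightarrow> ser" where
  "linv F = (THE G. bdd_ser G \<and> lmul G F = lone)"
definition lnpow :: "ser \<Rightarrow> nat \<Rightarrow> ser" where "lnpow F m = lpow (linv F) m"

definition dk :: "ser \<Rightarrow> ser" where "dk F = (\<lambda>j p. of_int (j + 1) * F (j + 1) p)"
definition du :: "nat \<Rightarrow> ser \<Rightarrow> ser" where "du i F = (\<lambda>j. pd i (F j))"

definition pbr :: "ser \<Rightarrow> ser \<Rightarrow> ser" where
  "pbr F G = lsub (lmul (dk F) (du vx G)) (lmul (du vx F) (dk G))"

definition ppos :: "ser \<Rightarrow> ser" where "ppos F = (\<lambda>j. if j > 0 then F j else zc)"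
definition pnonpos :: "ser \<Rightarrow> ser" where "pnonpos F = (\<lambda>j. if j \<le> 0 then F j else zc)"

text \<open>Formal (k-adically convergent) sum of a sequence of series, coefficientwise;
  each coefficient receives only finitely many nonzero contributions.\<close>
definition fsum :: "(nat \<Rightarrow> ser) \<Rightarrow> ser" where
  "fsum S = (\<lambda>j p. \<Sum>m\<in>{m. S m j \<noteq> zc}. S m j p)"

definition exp_ad :: "ser \<Rightarrow> ser \<Rightarrow> ser" where
  "exp_ad \<phi> X = fsum (\<lambda>m. lscal (\<lambda>p. 1 / fact m) ((pbr \<phi> ^^ m) X))"

definition nabla :: "nat \<Rightarrow> ser \<Rightarrow> ser \<Rightarrow> ser" where
  "nabla i \<psi> F = fsum (\<lambda>m. lscal (\<lambda>p. 1 / fact (Suc m)) ((pbr \<psi> ^^ m) (du i F)))"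

text \<open>log(1+G) for G with only negative powers of k.\<close>
definition log1p :: "ser \<Rightarrow> ser" where
  "log1p G = fsum (\<lambda>m. if m = 0 then zser
      else lscal (\<lambda>p. (-1) ^ (m + 1) / real m) (lpow G m))"

text \<open>Regular parts: log P - N log k and N log L - N log k.
  Here p_n = P (N - n), p_0 = P N.\<close>
definition logP_reg :: "nat \<Rightarrow> ser \<Rightarrow> ser" where
  "logP_reg N P = ladd (lcst (\<lambda>p. ln \<bar>P (int N) p\<bar>))
     (log1p (\<lambda>j p. if j < 0 \<and> - j \<le> int N - 1 then P (int N + j) p / P (int N) p else 0))"

definition NlogL_reg :: "nat \<Rightarrow> ser \<Rightarrow> ser" where
  "NlogL_reg N L = lscal (\<lambda>p. real N) (log1p (\<lambda>j. if j < 0 then L (j + 1) else zc))"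

text \<open>{log P, F} = {log P - N log k, F} + N k^{-1} F_x.\<close>
definition pbr_logP :: "nat \<Rightarrow> ser \<Rightarrow> ser \<Rightarrow> ser" where
  "pbr_logP N P F = ladd (pbr (logP_reg N P) F) (lscal (\<lambda>p. real N) (kshift (-1) (du vx F)))"

definition Bn :: "ser \<Rightarrow> nat \<Rightarrow> ser" where "Bn L n = ppos (lpow L n)"
definition Bcn :: "ser \<Rightarrow> nat \<Rightarrow> ser" where "Bcn L n = lneg (pnonpos (lpow L n))"

end

theory Submission
  imports Defs "HOL-Computational_Algebra.Formal_Laurent_Series"
begin

text \<open>The dressing operator \<open>e\<^sup>a\<^sup>d\<^sup>\<phi>\<close> is an automorphism of the Poisson algebra of Laurent series
  in \<open>k\<^sup>-\<^sup>1\<close>.  Hence \<open>L = e\<^sup>a\<^sup>d\<^sup>\<phi> k\<close> and \<open>M = e\<^sup>a\<^sup>d\<^sup>\<phi> (x + N s k\<^sup>-\<^sup>1)\<close> satisfy \<open>{L, M} = 1\<close>, and every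
  series without positive powers of \<open>k\<close> has a unique expansion \<open>\<Sum>\<^sub>m a\<^sub>m L\<^sup>-\<^sup>m\<close>.  Differentiating
  the dressing gives \<open>\<partial>\<^sub>u L = {\<nabla>\<^sub>u\<phi>, L}\<close> and \<open>\<partial>\<^sub>u M = e\<^sup>a\<^sup>d\<^sup>\<phi> (\<partial>\<^sub>u (x + N s k\<^sup>-\<^sup>1)) + {\<nabla>\<^sub>u\<phi>, M}\<close>.
  Expanding \<open>\<nabla>\<^sub>u\<phi> = \<Sum>\<^sub>m c\<^sub>m L\<^sup>-\<^sup>m\<close> and \<open>M = x + N s L\<^sup>-\<^sup>1 + \<Sum>\<^sub>m v\<^sub>m L\<^sup>-\<^sup>m\<^sup>-\<^sup>1\<close> and comparing
  coefficients, the chain rule and \<open>{L, M} = 1\<close> leave \<open>c\<^sub>0 = \<partial>\<^sub>u \<phi>\<^sub>0\<close> and \<open>\<partial>\<^sub>u v\<^sub>m = -m c\<^sub>m\<close> for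
  \<open>m \<ge> 1\<close>.  Both formulas then follow from \<open>B\<^sub>n = L\<^sup>n + B\<^sup>c\<^sub>n = L\<^sup>n + \<nabla>\<^sub>t\<^sub>n\<phi>\<close> and
  \<open>log P = N log L + \<nabla>\<^sub>s\<phi>\<close>.\<close>

section \<open>Smooth coefficient functions\<close>

definition has_pds :: "coef \<Rightarrow> bool" where
  "has_pds f \<longleftrightarrow> (\<forall>i p. ((\<lambda>h. f (p(i := h))) has_field_derivative pd i f p) (at (p i)))"

definition continuous_pairwise :: "coef \<Rightarrow> bool" where
  "continuous_pairwise f \<longleftrightarrow>
     (\<forall>i j p. continuous_on UNIV (\<lambda>z. f (p(i := fst z, j := snd z))))"

lemma pd_eqI: "((\<lambda>h. f (p(i := h))) has_field_derivative D) (at (p i)) \<Longrightarrow> pd i f p = D"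
  unfolding pd_def by (rule DERIV_imp_deriv)

lemma has_pds_iff_differentiable:
  "has_pds f \<longleftrightarrow> (\<forall>i p. (\<lambda>h. f (p(i := h))) differentiable (at (p i)))"
  unfolding has_pds_def pd_def using DERIV_deriv_iff_real_differentiable by blast

lemma smooth_fn_has_pds: "smooth_fn f \<Longrightarrow> has_pds f"
  unfolding has_pds_iff_differentiable by (cases rule: smooth_fn.cases) auto

lemma smooth_fn_continuous_pairwise: "smooth_fn f \<Longrightarrow> continuous_pairwise f"
  unfolding continuous_pairwise_def by (cases rule: smooth_fn.cases) (auto simp: case_prod_beta')

lemma smooth_fn_pd: "smooth_fn f \<Longrightarrow> smooth_fn (pd i f)"
  by (cases rule: smooth_fn.cases) auto

lemma pd_add: "has_pds f \<Longrightarrow> has_pds g \<Longrightarrow> pd i (\<lambda>p. f p + g p) = (\<lambda>p. pd i f p + pd i g p)"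
  unfolding has_pds_def by (intro ext pd_eqI) (auto intro!: derivative_eq_intros)

lemma pd_mult:
  "has_pds f \<Longrightarrow> has_pds g \<Longrightarrow> pd i (\<lambda>p. f p * g p) = (\<lambda>p. f p * pd i g p + pd i f p * g p)"
  unfolding has_pds_def by (intro ext pd_eqI) (auto intro!: derivative_eq_intros)

lemma pd_uminus: "has_pds f \<Longrightarrow> pd i (\<lambda>p. - f p) = (\<lambda>p. - pd i f p)"
  unfolding has_pds_def by (intro ext pd_eqI) (auto intro!: derivative_eq_intros)

lemma pd_const: "pd i (\<lambda>p. c) = (\<lambda>p. 0)"
  by (intro ext pd_eqI) (auto intro!: derivative_eq_intros)

lemma pd_coord: "pd i (\<lambda>p. p k) = (\<lambda>p. if i = k then 1 else 0)"
proof (intro ext pd_eqI)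
  fix p
  show "((\<lambda>h. (p(i := h)) k) has_field_derivative (if i = k then 1 else 0)) (at (p i))"
    by (cases "i = k") (auto intro!: derivative_eq_intros)
qed

lemma has_pds_add: "has_pds f \<Longrightarrow> has_pds g \<Longrightarrow> has_pds (\<lambda>p. f p + g p)"
  using pd_add[of f g] unfolding has_pds_def by (auto intro!: derivative_eq_intros)

lemma has_pds_mult: "has_pds f \<Longrightarrow> has_pds g \<Longrightarrow> has_pds (\<lambda>p. f p * g p)"
  using pd_mult[of f g] unfolding has_pds_def by (auto intro!: derivative_eq_intros)

lemma has_pds_uminus: "has_pds f \<Longrightarrow> has_pds (\<lambda>p. - f p)"
  using pd_uminus[of f] unfolding has_pds_def by (auto intro!: derivative_eq_intros)

lemma has_pds_const: "has_pds (\<lambda>p. c)"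
  using pd_const unfolding has_pds_def by (auto intro!: derivative_eq_intros)

lemma has_pds_coord: "has_pds (\<lambda>p. p k)"
  unfolding has_pds_def pd_coord by (auto intro!: derivative_eq_intros)

lemma continuous_pairwise_add:
  "continuous_pairwise f \<Longrightarrow> continuous_pairwise g \<Longrightarrow> continuous_pairwise (\<lambda>p. f p + g p)"
  unfolding continuous_pairwise_def by (intro allI continuous_on_add) auto

lemma continuous_pairwise_mult:
  "continuous_pairwise f \<Longrightarrow> continuous_pairwise g \<Longrightarrow> continuous_pairwise (\<lambda>p. f p * g p)"
  unfolding continuous_pairwise_def by (intro allI continuous_on_mult) auto

lemma continuous_pairwise_uminus: "continuous_pairwise f \<Longrightarrow> continuous_pairwise (\<lambda>p. - f p)"
  unfolding continuous_pairwise_def by (intro allI continuous_on_minus) auto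

lemma continuous_pairwise_const: "continuous_pairwise (\<lambda>p. c)"
  unfolding continuous_pairwise_def by auto

lemma continuous_pairwise_coord: "continuous_pairwise (\<lambda>p. p k)"
  unfolding continuous_pairwise_def
proof (intro allI)
  fix i j and p :: "nat \<Rightarrow> real"
  have eq: "(\<lambda>z. (p(i := fst z, j := snd z)) k)
      = (if j = k then snd else if i = k then fst else (\<lambda>z. p k))"
    by (auto simp: fun_eq_iff)
  show "continuous_on UNIV (\<lambda>z::real \<times> real. (p(i := fst z, j := snd z)) k)"
    unfolding eq by (simp add: continuous_on_fst continuous_on_snd continuous_on_id)
qed

text \<open>Since \<open>smooth_fn\<close> is coinductive, its closure under the ring operations is proved by
  coinduction, with the inductively generated closure below as the invariant.\<close>

inductive smooth_closure :: "coef \<Rightarrow> bool" where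
  smooth: "smooth_fn f \<Longrightarrow> smooth_closure f"
| const: "smooth_closure (\<lambda>p. c)"
| coord: "smooth_closure (\<lambda>p. p k)"
| add: "smooth_closure f \<Longrightarrow> smooth_closure g \<Longrightarrow> smooth_closure (\<lambda>p. f p + g p)"
| mult: "smooth_closure f \<Longrightarrow> smooth_closure g \<Longrightarrow> smooth_closure (\<lambda>p. f p * g p)"
| uminus: "smooth_closure f \<Longrightarrow> smooth_closure (\<lambda>p. - f p)"

lemma smooth_closure_pd:
  "smooth_closure f \<Longrightarrow> has_pds f \<and> continuous_pairwise f \<and> (\<forall>i. smooth_closure (pd i f))"
proof (induction rule: smooth_closure.induct)
  case (smooth f)
  then show ?case
    using smooth_fn_has_pds smooth_fn_continuous_pairwise smooth_fn_pd smooth_closure.smooth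
    by blast
next
  case (const c)
  show ?case
    using has_pds_const continuous_pairwise_const pd_const smooth_closure.const by simp
next
  case (coord k)
  have "smooth_closure (pd i (\<lambda>p. p k))" for i
    unfolding pd_coord by (cases "i = k") (auto intro: smooth_closure.const)
  then show ?case using has_pds_coord continuous_pairwise_coord by blast
next
  case (add f g)
  then have "smooth_closure (pd i (\<lambda>p. f p + g p))" for i
    by (simp add: pd_add smooth_closure.add)
  with add show ?case by (simp add: has_pds_add continuous_pairwise_add)
next
  case (mult f g)
  then have "smooth_closure (pd i (\<lambda>p. f p * g p))" for i
    by (simp add: pd_mult smooth_closure.add smooth_closure.mult)
  with mult show ?case by (simp add: has_pds_mult continuous_pairwise_mult)
next
  case (uminus f)
  then have "smooth_closure (pd i (\<lambda>p. - f p))" for i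
    by (simp add: pd_uminus smooth_closure.uminus)
  with uminus show ?case by (simp add: has_pds_uminus continuous_pairwise_uminus)
qed

lemma smooth_closure_smooth_fn: "smooth_closure f \<Longrightarrow> smooth_fn f"
proof (coinduction arbitrary: f rule: smooth_fn.coinduct)
  case (smooth_fn f)
  then show ?case
    using smooth_closure_pd[OF smooth_fn]
    unfolding has_pds_iff_differentiable continuous_pairwise_def by (auto simp: case_prod_beta')
qed

lemma smooth_fn_const: "smooth_fn (\<lambda>p. c)"
  by (rule smooth_closure_smooth_fn, rule smooth_closure.const)

lemma smooth_fn_coord: "smooth_fn (\<lambda>p. p k)"
  by (rule smooth_closure_smooth_fn, rule smooth_closure.coord)

lemma smooth_fn_add: "smooth_fn f \<Longrightarrow> smooth_fn g \<Longrightarrow> smooth_fn (\<lambda>p. f p + g p)"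
  by (rule smooth_closure_smooth_fn, intro smooth_closure.add smooth_closure.smooth)

lemma smooth_fn_mult: "smooth_fn f \<Longrightarrow> smooth_fn g \<Longrightarrow> smooth_fn (\<lambda>p. f p * g p)"
  by (rule smooth_closure_smooth_fn, intro smooth_closure.mult smooth_closure.smooth)

lemma smooth_fn_uminus: "smooth_fn f \<Longrightarrow> smooth_fn (\<lambda>p. - f p)"
  by (rule smooth_closure_smooth_fn, intro smooth_closure.uminus smooth_closure.smooth)

lemma smooth_fn_diff: "smooth_fn f \<Longrightarrow> smooth_fn g \<Longrightarrow> smooth_fn (\<lambda>p. f p - g p)"
  using smooth_fn_add[OF _ smooth_fn_uminus, of f g] by simp

lemma second_difference_mvt:
  fixes g gx gxy :: "real \<Rightarrow> real \<Rightarrow> real"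
  assumes gx: "\<And>x y. ((\<lambda>x. g x y) has_field_derivative gx x y) (at x)"
    and gxy: "\<And>x y. ((\<lambda>y. gx x y) has_field_derivative gxy x y) (at y)"
    and h: "h > 0"
  shows "\<exists>\<xi> \<eta>. a < \<xi> \<and> \<xi> < a + h \<and> b < \<eta> \<and> \<eta> < b + h \<and>
           g (a + h) (b + h) - g (a + h) b - (g a (b + h) - g a b) = h * (h * gxy \<xi> \<eta>)"
proof -
  have "\<exists>z. a < z \<and> z < a + h \<and>
      (\<lambda>x. g x (b + h) - g x b) (a + h) - (\<lambda>x. g x (b + h) - g x b) a
        = (a + h - a) * (gx z (b + h) - gx z b)"
    using h by (intro MVT2) (auto intro!: derivative_eq_intros gx)
  then obtain \<xi> where \<xi>: "a < \<xi>" "\<xi> < a + h"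
    and e1: "g (a + h) (b + h) - g (a + h) b - (g a (b + h) - g a b) = h * (gx \<xi> (b + h) - gx \<xi> b)"
    by auto
  obtain \<eta> where \<eta>: "b < \<eta>" "\<eta> < b + h" and e2: "gx \<xi> (b + h) - gx \<xi> b = h * gxy \<xi> \<eta>"
    using MVT2[of b "b + h" "gx \<xi>" "gxy \<xi>"] h gxy by auto
  show ?thesis using \<xi> \<eta> e1 e2 by auto
qed

lemma mixed_partials_symmetric:
  fixes g gx gy gxy gyx :: "real \<Rightarrow> real \<Rightarrow> real"
  assumes gx: "\<And>x y. ((\<lambda>x. g x y) has_field_derivative gx x y) (at x)"
    and gxy: "\<And>x y. ((\<lambda>y. gx x y) has_field_derivative gxy x y) (at y)"
    and gy: "\<And>x y. ((\<lambda>y. g x y) has_field_derivative gy x y) (at y)"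
    and gyx: "\<And>x y. ((\<lambda>x. gy x y) has_field_derivative gyx x y) (at x)"
    and cont_xy: "continuous_on UNIV (\<lambda>z. gxy (fst z) (snd z))"
    and cont_yx: "continuous_on UNIV (\<lambda>z. gyx (fst z) (snd z))"
  shows "gxy a b = gyx a b"
proof (rule ccontr)
  assume ne: "gxy a b \<noteq> gyx a b"
  define e where "e = \<bar>gxy a b - gyx a b\<bar> / 2"
  have e: "e > 0" using ne by (simp add: e_def)
  obtain d1 where "d1 > 0"
    and d1: "\<And>z. dist z (a, b) < d1 \<Longrightarrow> dist (gxy (fst z) (snd z)) (gxy a b) < e"
    using cont_xy e unfolding continuous_on_iff by (metis UNIV_I fst_conv snd_conv)
  obtain d2 where "d2 > 0"
    and d2: "\<And>z. dist z (a, b) < d2 \<Longrightarrow> dist (gyx (fst z) (snd z)) (gyx a b) < e"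
    using cont_yx e unfolding continuous_on_iff by (metis UNIV_I fst_conv snd_conv)
  define h where "h = min d1 d2 / 2"
  have h: "h > 0" "2 * h \<le> d1" "2 * h \<le> d2" using \<open>d1 > 0\<close> \<open>d2 > 0\<close> by (auto simp: h_def)
  have near: "dist (x, y) (a, b) < 2 * h" if "a < x" "x < a + h" "b < y" "y < b + h" for x y
  proof -
    have "dist (x, y) (a, b) = sqrt ((x - a)\<^sup>2 + (y - b)\<^sup>2)"
      by (simp add: dist_Pair_Pair dist_real_def power2_abs)
    also have "\<dots> \<le> \<bar>x - a\<bar> + \<bar>y - b\<bar>" by (rule sqrt_sum_squares_le_sum_abs)
    also have "\<dots> < 2 * h" using that by auto
    finally show ?thesis .
  qed
  obtain \<xi> \<eta> where \<xi>\<eta>: "a < \<xi>" "\<xi> < a + h" "b < \<eta>" "\<eta> < b + h"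
    and diff_xy: "g (a + h) (b + h) - g (a + h) b - (g a (b + h) - g a b) = h * (h * gxy \<xi> \<eta>)"
    using second_difference_mvt[OF gx gxy h(1)] by blast
  obtain \<eta>' \<xi>' where \<xi>\<eta>': "b < \<eta>'" "\<eta>' < b + h" "a < \<xi>'" "\<xi>' < a + h"
    and diff_yx: "g (a + h) (b + h) - g a (b + h) - (g (a + h) b - g a b) = h * (h * gyx \<xi>' \<eta>')"
    using second_difference_mvt[of "\<lambda>y x. g x y" "\<lambda>y x. gy x y" "\<lambda>y x. gyx x y", OF gy gyx h(1)]
    by blast
  have "gxy \<xi> \<eta> = gyx \<xi>' \<eta>'"
    using diff_xy diff_yx h(1) by (simp add: algebra_simps)
  moreover have "dist (gxy \<xi> \<eta>) (gxy a b) < e"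
    using d1[of "(\<xi>, \<eta>)"] near[OF \<xi>\<eta>] h(2) by simp
  moreover have "dist (gyx \<xi>' \<eta>') (gyx a b) < e"
    using d2[of "(\<xi>', \<eta>')"] near[OF \<xi>\<eta>'(3,4,1,2)] h(3) by simp
  ultimately have "\<bar>gxy a b - gyx a b\<bar> < 2 * e"
    unfolding dist_real_def by linarith
  then show False by (simp add: e_def)
qed

lemma has_pds_along_pair:
  assumes "has_pds F" "i \<noteq> j"
  shows "((\<lambda>x. F (p(i := x, j := y))) has_field_derivative pd i F (p(i := x, j := y))) (at x)"
    and "((\<lambda>y. F (p(i := x, j := y))) has_field_derivative pd j F (p(i := x, j := y))) (at y)"
proof -
  let ?q = "p(i := x, j := y)"
  have upd: "?q i = x" "?q j = y" "?q(i := h) = p(i := h, j := y)" "?q(j := h) = p(i := x, j := h)"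
    for h
    using assms(2) by (simp_all add: fun_upd_twist)
  have "((\<lambda>h. F (?q(i := h))) has_field_derivative pd i F ?q) (at (?q i))"
    "((\<lambda>h. F (?q(j := h))) has_field_derivative pd j F ?q) (at (?q j))"
    using assms(1) unfolding has_pds_def by blast+
  then show "((\<lambda>x. F (p(i := x, j := y))) has_field_derivative pd i F ?q) (at x)"
    "((\<lambda>y. F (p(i := x, j := y))) has_field_derivative pd j F ?q) (at y)"
    by (simp_all only: upd)
qed

lemma pd_commute:
  assumes "smooth_fn f"
  shows "pd i (pd j f) = pd j (pd i f)"
proof (cases "i = j")
  case False
  have smooth: "smooth_fn (pd i f)" "smooth_fn (pd j f)"
    "smooth_fn (pd j (pd i f))" "smooth_fn (pd i (pd j f))"
    using assms smooth_fn_pd by blast+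
  then have has: "has_pds f" "has_pds (pd i f)" "has_pds (pd j f)"
    using assms smooth_fn_has_pds by blast+
  have cont: "continuous_on UNIV (\<lambda>z. pd j (pd i f) (p(i := fst z, j := snd z)))"
    "continuous_on UNIV (\<lambda>z. pd i (pd j f) (p(i := fst z, j := snd z)))" for p
    using smooth(3,4)[THEN smooth_fn_continuous_pairwise]
    unfolding continuous_pairwise_def by blast+
  show ?thesis
  proof
    fix p
    have "pd j (pd i f) (p(i := p i, j := p j)) = pd i (pd j f) (p(i := p i, j := p j))"
      by (rule mixed_partials_symmetric[where g = "\<lambda>x y. f (p(i := x, j := y))",
            OF has_pds_along_pair(1)[OF has(1) False] has_pds_along_pair(2)[OF has(2) False]
               has_pds_along_pair(2)[OF has(1) False] has_pds_along_pair(1)[OF has(3) False] cont])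
    then show "pd i (pd j f) p = pd j (pd i f) p" by simp
  qed
qed simp

section \<open>The ring of smooth functions\<close>

typedef smooth = "{f :: coef. smooth_fn f}" morphisms Rep_smooth Abs_smooth
  using smooth_fn_const by blast

setup_lifting type_definition_smooth

instantiation smooth :: comm_ring_1
begin
lift_definition zero_smooth :: smooth is "\<lambda>p. 0" by (rule smooth_fn_const)
lift_definition one_smooth :: smooth is "\<lambda>p. 1" by (rule smooth_fn_const)
lift_definition plus_smooth :: "smooth \<Rightarrow> smooth \<Rightarrow> smooth" is "\<lambda>f g p. f p + g p"
  by (rule smooth_fn_add)
lift_definition minus_smooth :: "smooth \<Rightarrow> smooth \<Rightarrow> smooth" is "\<lambda>f g p. f p - g p"
  by (rule smooth_fn_diff)
lift_definition uminus_smooth :: "smooth \<Rightarrow> smooth" is "\<lambda>f p. - f p"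
  by (rule smooth_fn_uminus)
lift_definition times_smooth :: "smooth \<Rightarrow> smooth \<Rightarrow> smooth" is "\<lambda>f g p. f p * g p"
  by (rule smooth_fn_mult)
instance
  by standard (transfer; simp add: algebra_simps fun_eq_iff)+
end

lift_definition pd_smooth :: "nat \<Rightarrow> smooth \<Rightarrow> smooth" is pd by (rule smooth_fn_pd)
lift_definition sconst :: "real \<Rightarrow> smooth" is "\<lambda>r p. r" by (rule smooth_fn_const)
lift_definition scoord :: "nat \<Rightarrow> smooth" is "\<lambda>k p. p k" by (rule smooth_fn_coord)

lemma pd_smooth_add [simp]: "pd_smooth i (a + b) = pd_smooth i a + pd_smooth i b"
  by transfer (simp add: pd_add smooth_fn_has_pds)

lemma pd_smooth_mult [simp]: "pd_smooth i (a * b) = a * pd_smooth i b + pd_smooth i a * b"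
  by transfer (simp add: pd_mult smooth_fn_has_pds)

lemma pd_smooth_uminus [simp]: "pd_smooth i (- a) = - pd_smooth i a"
  by transfer (simp add: pd_uminus smooth_fn_has_pds)

lemma pd_smooth_diff [simp]: "pd_smooth i (a - b) = pd_smooth i a - pd_smooth i b"
  using pd_smooth_add[of i a "- b"] by simp

lemma pd_smooth_sconst [simp]: "pd_smooth i (sconst r) = 0"
  by transfer (simp add: pd_const)

lemma pd_smooth_zero [simp]: "pd_smooth i 0 = 0"
  by transfer (simp add: pd_const)

lemma pd_smooth_one [simp]: "pd_smooth i 1 = 0"
  by transfer (simp add: pd_const)

lemma pd_smooth_scoord: "pd_smooth i (scoord k) = sconst (if i = k then 1 else 0)"
  by transfer (simp add: pd_coord fun_eq_iff)

lemma pd_smooth_commute: "pd_smooth i (pd_smooth j a) = pd_smooth j (pd_smooth i a)"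
  by transfer (simp add: pd_commute)

lemma sconst_add: "sconst (a + b) = sconst a + sconst b" by transfer simp
lemma sconst_mult: "sconst (a * b) = sconst a * sconst b" by transfer simp
lemma sconst_uminus: "sconst (- a) = - sconst a" by transfer simp
lemma sconst_diff: "sconst (a - b) = sconst a - sconst b" by transfer simp
lemma sconst_0 [simp]: "sconst 0 = 0" by transfer simp
lemma sconst_1 [simp]: "sconst 1 = 1" by transfer simp

lemma of_nat_smooth: "(of_nat n :: smooth) = sconst (of_nat n)"
  by (induction n) (simp_all add: sconst_add)

lemma of_int_smooth: "(of_int n :: smooth) = sconst (of_int n)"
  by (cases n rule: int_cases) (simp_all add: of_nat_smooth sconst_uminus sconst_add sconst_diff)

lemma pd_smooth_of_int [simp]: "pd_smooth i (of_int n) = 0"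
  by (simp add: of_int_smooth)

lemma Rep_smooth_add: "Rep_smooth (a + b) = (\<lambda>p. Rep_smooth a p + Rep_smooth b p)"
  by transfer simp
lemma Rep_smooth_mult: "Rep_smooth (a * b) = (\<lambda>p. Rep_smooth a p * Rep_smooth b p)"
  by transfer simp
lemma Rep_smooth_uminus: "Rep_smooth (- a) = (\<lambda>p. - Rep_smooth a p)" by transfer simp
lemma Rep_smooth_diff: "Rep_smooth (a - b) = (\<lambda>p. Rep_smooth a p - Rep_smooth b p)"
  by transfer simp
lemma Rep_smooth_0: "Rep_smooth 0 = zc" unfolding zc_def by transfer simp
lemma Rep_smooth_1: "Rep_smooth 1 = (\<lambda>p. 1)" by transfer simp
lemma Rep_smooth_sconst: "Rep_smooth (sconst r) = (\<lambda>p. r)" by transfer simp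
lemma Rep_smooth_scoord: "Rep_smooth (scoord k) = (\<lambda>p. p k)" by transfer simp
lemma Rep_smooth_pd_smooth: "Rep_smooth (pd_smooth i a) = pd i (Rep_smooth a)" by transfer simp

lemma Rep_smooth_eq_zc_iff: "Rep_smooth a = zc \<longleftrightarrow> a = 0"
  using Rep_smooth_0 Rep_smooth_inject by metis

lemma Rep_smooth_sum: "Rep_smooth (\<Sum>x\<in>A. f x) = (\<lambda>p. \<Sum>x\<in>A. Rep_smooth (f x) p)"
  by (induction A rule: infinite_finite_induct) (simp_all add: Rep_smooth_0 zc_def Rep_smooth_add)

lemma Abs_smooth_inverse': "smooth_fn f \<Longrightarrow> Rep_smooth (Abs_smooth f) = f"
  using Abs_smooth_inverse by simp

lemma Abs_smooth_zc: "Abs_smooth zc = 0"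
  by (metis Rep_smooth_0 Rep_smooth_inverse)

unbundle fps_syntax

section \<open>Laurent series in the inverse spectral parameter\<close>

text \<open>A series in \<open>k\<close> with finitely many positive powers is encoded as a Laurent series in
  \<open>X = k\<^sup>-\<^sup>1\<close>: the coefficient of \<open>k\<^sup>j\<close> is \<open>f $$ (-j)\<close>.  Convergence of infinite sums
  is \<open>X\<close>-adic.\<close>

definition vanishes_below :: "'a::zero fls \<Rightarrow> int \<Rightarrow> bool" where
  "vanishes_below f c \<longleftrightarrow> (\<forall>n<c. f $$ n = 0)"

lemma vanishes_belowD: "vanishes_below f c \<Longrightarrow> n < c \<Longrightarrow> f $$ n = 0"
  by (simp add: vanishes_below_def)

lemma vanishes_below_subdegree: "vanishes_below f (fls_subdegree f)"
  by (simp add: vanishes_below_def)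

lemma vanishes_below_mono: "vanishes_below f c \<Longrightarrow> d \<le> c \<Longrightarrow> vanishes_below f d"
  by (simp add: vanishes_below_def)

lemma vanishes_below_add:
  "vanishes_below f c \<Longrightarrow> vanishes_below g c \<Longrightarrow> vanishes_below (f + g) c"
  by (simp add: vanishes_below_def)

lemma vanishes_below_diff:
  "vanishes_below f c \<Longrightarrow> vanishes_below g c \<Longrightarrow> vanishes_below (f - g) c"
  by (simp add: vanishes_below_def)

lemma vanishes_below_uminus: "vanishes_below f c \<Longrightarrow> vanishes_below (- f) c"
  by (simp add: vanishes_below_def)

lemma vanishes_below_0 [simp]: "vanishes_below 0 c"
  by (simp add: vanishes_below_def)

lemma vanishes_below_const: "vanishes_below (fls_const a) 0"
  by (simp add: vanishes_below_def)

lemma vanishes_below_1: "vanishes_below 1 0"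
  by (simp add: vanishes_below_def)

lemma vanishes_below_X: "vanishes_below fls_X 1"
  by (simp add: vanishes_below_def)

lemma vanishes_below_X_inv: "vanishes_below fls_X_inv (-1)"
  by (simp add: vanishes_below_def)

lemma vanishes_below_sum:
  "(\<And>x. x \<in> A \<Longrightarrow> vanishes_below (f x) c) \<Longrightarrow> vanishes_below (\<Sum>x\<in>A. f x) c"
  by (induction A rule: infinite_finite_induct) (auto intro: vanishes_below_add)

lemma fls_times_nth_superset:
  fixes f g :: "'a::semiring_0 fls"
  assumes "vanishes_below f a" "vanishes_below g b" "finite I" "{a..n-b} \<subseteq> I"
  shows "(f * g) $$ n = (\<Sum>i\<in>I. f $$ i * g $$ (n - i))"
proof -
  define S where "S = {fls_subdegree f..n - fls_subdegree g}"
  have "(f * g) $$ n = (\<Sum>i\<in>S. f $$ i * g $$ (n - i))"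
    unfolding S_def by (rule fls_times_nth(2))
  also have "\<dots> = (\<Sum>i\<in>S \<union> I. f $$ i * g $$ (n - i))"
  proof (rule sum.mono_neutral_left)
    show "\<forall>i\<in>S \<union> I - S. f $$ i * g $$ (n - i) = 0"
    proof
      fix i assume "i \<in> S \<union> I - S"
      then have "i < fls_subdegree f \<or> n - i < fls_subdegree g" by (auto simp: S_def)
      then show "f $$ i * g $$ (n - i) = 0" by auto
    qed
  qed (auto simp: S_def assms(3))
  also have "\<dots> = (\<Sum>i\<in>I. f $$ i * g $$ (n - i))"
  proof (rule sum.mono_neutral_right)
    show "\<forall>i\<in>S \<union> I - I. f $$ i * g $$ (n - i) = 0"
    proof
      fix i assume "i \<in> S \<union> I - I"
      then have "i \<notin> {a..n-b}" using assms(4) by blast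
      then have "i < a \<or> n - i < b" by auto
      then show "f $$ i * g $$ (n - i) = 0" using assms(1,2) by (auto simp: vanishes_below_def)
    qed
  qed (auto simp: S_def assms(3))
  finally show ?thesis .
qed

lemma vanishes_below_mult:
  fixes f g :: "'a::semiring_0 fls"
  shows "vanishes_below f a \<Longrightarrow> vanishes_below g b \<Longrightarrow> vanishes_below (f * g) (a + b)"
  unfolding vanishes_below_def[of "f*g"] using fls_times_nth_superset[of f a g b "{}"] by auto

lemma fls_times_nth_low:
  fixes f g :: "'a::semiring_0 fls"
  shows "vanishes_below f a \<Longrightarrow> vanishes_below g b \<Longrightarrow> (f * g) $$ (a + b) = f $$ a * g $$ b"
  using fls_times_nth_superset[of f a g b "{a}" "a+b"] by auto

lemma vanishes_below_power:
  fixes f :: "'a::semiring_1 fls"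
  shows "vanishes_below f a \<Longrightarrow> vanishes_below (f ^ n) (int n * a)"
  by (induction n) (auto simp: vanishes_below_1 algebra_simps dest: vanishes_below_mult)

lemma fls_X_times_X_inv: "(fls_X * fls_X_inv :: 'a::ring_1 fls) = 1"
  by (simp add: fls_X_times_conv_shift)

lemma le_natI: "c + int j \<le> n \<Longrightarrow> j \<le> nat (n - c)"
  by (simp add: le_nat_iff)

lemma le_natI2: "c + int m + int j \<le> n \<Longrightarrow> j \<le> nat (n - c)"
  by (simp add: le_nat_iff)

lemma gt_natD: "nat (n - c) < m + j \<Longrightarrow> n < c + int m + int j"
  by linarith

definition adic_summable :: "(nat \<Rightarrow> 'a::zero fls) \<Rightarrow> int \<Rightarrow> bool" where
  "adic_summable S c \<longleftrightarrow> (\<forall>m. vanishes_below (S m) (c + int m))"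

definition adic_sum :: "(nat \<Rightarrow> 'a::comm_monoid_add fls) \<Rightarrow> 'a fls" where
  "adic_sum S = Abs_fls (\<lambda>n. \<Sum>m\<in>{m. S m $$ n \<noteq> 0}. S m $$ n)"

lemma adic_summableD: "adic_summable S c \<Longrightarrow> n < c + int m \<Longrightarrow> S m $$ n = 0"
  by (simp add: adic_summable_def vanishes_below_def)

lemma adic_summable_mono: "adic_summable S c \<Longrightarrow> d \<le> c \<Longrightarrow> adic_summable S d"
  unfolding adic_summable_def using vanishes_below_mono by (meson add_right_mono)

lemma adic_sum_nth_set:
  assumes "adic_summable S c" "finite M" "{m. c + int m \<le> n} \<subseteq> M"
  shows "adic_sum S $$ n = (\<Sum>m\<in>M. S m $$ n)"
proof -
  have supp: "{m. S m $$ k \<noteq> 0} \<subseteq> {m. c + int m \<le> k}" for k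
    using adic_summableD[OF assms(1)] by (auto simp: not_le[symmetric])
  have "adic_sum S $$ n = (\<Sum>m\<in>{m. S m $$ n \<noteq> 0}. S m $$ n)"
    unfolding adic_sum_def
  proof (rule nth_Abs_fls_lower_bound[of c])
    show "\<forall>k<c. (\<Sum>m\<in>{m. S m $$ k \<noteq> 0}. S m $$ k) = 0"
    proof (intro allI impI)
      fix k assume "k < c"
      then have "{m. S m $$ k \<noteq> 0} = {}" using supp[of k] by auto
      then show "(\<Sum>m\<in>{m. S m $$ k \<noteq> 0}. S m $$ k) = 0" by simp
    qed
  qed
  also have "\<dots> = (\<Sum>m\<in>M. S m $$ n)"
    by (rule sum.mono_neutral_left) (use assms(2,3) supp[of n] in auto)
  finally show ?thesis .
qed

lemma adic_sum_nth:
  "adic_summable S c \<Longrightarrow> adic_sum S $$ n = (\<Sum>m\<le>nat (n - c). S m $$ n)"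
  by (rule adic_sum_nth_set) auto

lemma vanishes_below_adic_sum: "adic_summable S c \<Longrightarrow> vanishes_below (adic_sum S) c"
  unfolding vanishes_below_def using adic_sum_nth_set[of S c "{}"] by auto

lemma adic_summable_add:
  "adic_summable S c \<Longrightarrow> adic_summable T c \<Longrightarrow> adic_summable (\<lambda>m. S m + T m) c"
  by (simp add: adic_summable_def vanishes_below_add)

lemma adic_summable_diff:
  "adic_summable S c \<Longrightarrow> adic_summable T c \<Longrightarrow> adic_summable (\<lambda>m. S m - T m) c"
  by (simp add: adic_summable_def vanishes_below_diff)

lemma adic_summable_uminus: "adic_summable S c \<Longrightarrow> adic_summable (\<lambda>m. - S m) c"
  by (simp add: adic_summable_def vanishes_below_uminus)

lemma adic_summable_mult_left:
  fixes f :: "'a::semiring_0 fls"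
  shows "vanishes_below f a \<Longrightarrow> adic_summable S c \<Longrightarrow> adic_summable (\<lambda>m. f * S m) (a + c)"
  unfolding adic_summable_def using vanishes_below_mult by (metis add.assoc)

lemma adic_summable_mult_right:
  fixes f :: "'a::comm_semiring_0 fls"
  shows "vanishes_below f a \<Longrightarrow> adic_summable S c \<Longrightarrow> adic_summable (\<lambda>m. S m * f) (a + c)"
  using adic_summable_mult_left[of f a S c] by (simp add: mult.commute)

lemma adic_sum_add:
  "adic_summable S c \<Longrightarrow> adic_summable T c \<Longrightarrow> adic_sum (\<lambda>m. S m + T m) = adic_sum S + adic_sum T"
  by (rule fls_eqI)
    (simp add: adic_sum_nth[of S c] adic_sum_nth[of T c] adic_sum_nth[OF adic_summable_add] sum.distrib)

lemma adic_sum_diff: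
  fixes S T :: "nat \<Rightarrow> 'a::ab_group_add fls"
  shows "adic_summable S c \<Longrightarrow> adic_summable T c \<Longrightarrow> adic_sum (\<lambda>m. S m - T m) = adic_sum S - adic_sum T"
  by (rule fls_eqI)
    (simp add: adic_sum_nth[of S c] adic_sum_nth[of T c] adic_sum_nth[OF adic_summable_diff] sum_subtractf)

lemma adic_sum_uminus:
  fixes S :: "nat \<Rightarrow> 'a::ab_group_add fls"
  shows "adic_summable S c \<Longrightarrow> adic_sum (\<lambda>m. - S m) = - adic_sum S"
  by (rule fls_eqI) (simp add: adic_sum_nth[of S c] adic_sum_nth[OF adic_summable_uminus] sum_negf)

lemma adic_sum_zero [simp]: "adic_sum (\<lambda>m. 0) = 0"
  by (simp add: adic_sum_def zero_fls_def)

lemma adic_sum_cong: "(\<And>m. S m = T m) \<Longrightarrow> adic_sum S = adic_sum T"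
  by metis

lemma adic_sum_mult_left:
  fixes f :: "'a::semiring_0 fls"
  assumes "adic_summable S c" "vanishes_below f a"
  shows "f * adic_sum S = adic_sum (\<lambda>m. f * S m)"
proof (rule fls_eqI)
  fix n
  define I where "I = {a..n-c}"
  define M where "M = {..nat (n - a - c)}"
  have fin: "finite I" "finite M" by (auto simp: I_def M_def)
  have "(f * adic_sum S) $$ n = (\<Sum>i\<in>I. f $$ i * adic_sum S $$ (n - i))"
    by (rule fls_times_nth_superset[OF assms(2) vanishes_below_adic_sum[OF assms(1)]])
      (auto simp: I_def)
  also have "\<dots> = (\<Sum>i\<in>I. f $$ i * (\<Sum>m\<in>M. S m $$ (n - i)))"
  proof (rule sum.cong[OF refl])
    fix i assume "i \<in> I"
    then have "{m. c + int m \<le> n - i} \<subseteq> M" by (auto simp: I_def M_def)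
    then show "f $$ i * adic_sum S $$ (n - i) = f $$ i * (\<Sum>m\<in>M. S m $$ (n - i))"
      using adic_sum_nth_set[OF assms(1) fin(2)] by simp
  qed
  also have "\<dots> = (\<Sum>m\<in>M. \<Sum>i\<in>I. f $$ i * S m $$ (n - i))"
    by (simp add: sum_distrib_left sum.swap[of _ M])
  also have "\<dots> = (\<Sum>m\<in>M. (f * S m) $$ n)"
  proof (rule sum.cong[OF refl])
    fix m assume "m \<in> M"
    have l: "vanishes_below (S m) (c + int m)" using assms(1) by (simp add: adic_summable_def)
    show "(\<Sum>i\<in>I. f $$ i * S m $$ (n - i)) = (f * S m) $$ n"
      by (rule fls_times_nth_superset[OF assms(2) l fin(1), symmetric]) (auto simp: I_def)
  qed
  also have "\<dots> = adic_sum (\<lambda>m. f * S m) $$ n"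
    by (rule adic_sum_nth_set[OF adic_summable_mult_left[OF assms(2,1)] fin(2), symmetric])
      (auto simp: M_def)
  finally show "(f * adic_sum S) $$ n = adic_sum (\<lambda>m. f * S m) $$ n" .
qed

lemma adic_sum_mult_right:
  fixes f :: "'a::comm_semiring_0 fls"
  shows "adic_summable S c \<Longrightarrow> vanishes_below f a \<Longrightarrow> adic_sum S * f = adic_sum (\<lambda>m. S m * f)"
  using adic_sum_mult_left[of S c f a] by (simp add: mult.commute)

lemma adic_summable_shift: "adic_summable S c \<Longrightarrow> adic_summable (\<lambda>m. S (Suc m)) (c + 1)"
  unfolding adic_summable_def by (metis add.assoc add.commute of_nat_Suc)

lemma adic_sum_shift:
  assumes "adic_summable S c"
  shows "adic_sum S = S 0 + adic_sum (\<lambda>m. S (Suc m))"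
proof (rule fls_eqI)
  fix n
  define K where "K = nat (n - c)"
  have "adic_sum S $$ n = (\<Sum>m\<in>{..Suc K}. S m $$ n)"
    by (rule adic_sum_nth_set[OF assms]) (auto simp: K_def)
  also have "\<dots> = S 0 $$ n + (\<Sum>m\<in>{..K}. S (Suc m) $$ n)"
    by (simp only: sum.atMost_Suc_shift)
  also have "(\<Sum>m\<in>{..K}. S (Suc m) $$ n) = adic_sum (\<lambda>m. S (Suc m)) $$ n"
    by (rule adic_sum_nth_set[OF adic_summable_shift[OF assms], symmetric]) (auto simp: K_def)
  finally show "adic_sum S $$ n = (S 0 + adic_sum (\<lambda>m. S (Suc m))) $$ n" by simp
qed

lemma vanishes_below_adic_sum_tail:
  fixes S :: "nat \<Rightarrow> 'a::ab_group_add fls"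
  shows "adic_summable S c \<Longrightarrow> vanishes_below (adic_sum S - S 0) (c + 1)"
  using adic_sum_shift vanishes_below_adic_sum[OF adic_summable_shift] by fastforce

lemma adic_sum_single: "adic_sum (\<lambda>m. if m = k then f else 0) = f"
proof -
  have "(\<Sum>m\<in>{m. (if m = k then f else 0) $$ n \<noteq> 0}. (if m = k then f else 0) $$ n) = f $$ n" for n
    by (cases "f $$ n = 0") (simp_all add: conj_commute)
  then show ?thesis
    unfolding adic_sum_def by (simp add: fls_nth_inverse)
qed

lemma sum_square_eq_sum_triangle:
  fixes a :: "nat \<Rightarrow> nat \<Rightarrow> 'a::comm_monoid_add"
  assumes "\<And>m j. K < m + j \<Longrightarrow> a m j = 0"
  shows "(\<Sum>m\<le>K. \<Sum>j\<le>K. a m j) = (\<Sum>k\<le>K. \<Sum>m\<le>k. a m (k - m))"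
proof -
  have "(\<Sum>m\<le>K. \<Sum>j\<le>K. a m j) = (\<Sum>(m, j)\<in>{..K} \<times> {..K}. a m j)"
    by (rule sum.cartesian_product)
  also have "\<dots> = (\<Sum>(m, j)\<in>{(m, j). m + j \<le> K}. a m j)"
    by (rule sum.mono_neutral_right) (use assms in \<open>auto simp: not_le[symmetric]\<close>)
  also have "\<dots> = (\<Sum>k\<le>K. \<Sum>m\<le>k. a m (k - m))"
    by (rule sum.triangle_reindex_eq)
  finally show ?thesis .
qed

lemma adic_sum_fubini:
  assumes F: "\<And>m j. vanishes_below (F m j) (c + int m + int j)"
  shows "adic_sum (\<lambda>m. adic_sum (\<lambda>j. F m j)) = adic_sum (\<lambda>k. \<Sum>m\<le>k. F m (k - m))"
proof (rule fls_eqI)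
  fix n
  have ci: "adic_summable (\<lambda>j. F m j) (c + int m)" for m using F by (simp add: adic_summable_def)
  have co: "adic_summable (\<lambda>m. adic_sum (\<lambda>j. F m j)) c"
    unfolding adic_summable_def using vanishes_below_adic_sum[OF ci] by blast
  have cr: "adic_summable (\<lambda>k. \<Sum>m\<le>k. F m (k - m)) c"
    unfolding adic_summable_def
  proof (intro allI vanishes_below_sum)
    fix k m :: nat assume "m \<in> {..k}"
    then have "c + int m + int (k - m) = c + int k" by auto
    then show "vanishes_below (F m (k - m)) (c + int k)" using F[of m "k - m"] by simp
  qed
  define K where "K = nat (n - c)"
  have "adic_sum (\<lambda>m. adic_sum (\<lambda>j. F m j)) $$ n = (\<Sum>m\<le>K. adic_sum (\<lambda>j. F m j) $$ n)"
    by (rule adic_sum_nth_set[OF co]) (auto simp: K_def intro: le_natI)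
  also have "\<dots> = (\<Sum>m\<le>K. \<Sum>j\<le>K. F m j $$ n)"
  proof (rule sum.cong[OF refl])
    fix m assume "m \<in> {..K}"
    show "adic_sum (\<lambda>j. F m j) $$ n = (\<Sum>j\<le>K. F m j $$ n)"
      by (rule adic_sum_nth_set[OF ci]) (auto simp: K_def intro: le_natI2)
  qed
  also have "\<dots> = (\<Sum>k\<le>K. \<Sum>m\<le>k. F m (k - m) $$ n)"
  proof (rule sum_square_eq_sum_triangle)
    fix m j assume "K < m + j"
    then have "n < c + int m + int j" unfolding K_def by (rule gt_natD)
    then show "F m j $$ n = 0" using vanishes_belowD[OF F[of m j]] by simp
  qed
  also have "\<dots> = (\<Sum>k\<le>K. (\<Sum>m\<le>k. F m (k - m)) $$ n)"
    by (simp add: fls_nth_sum)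
  also have "\<dots> = adic_sum (\<lambda>k. \<Sum>m\<le>k. F m (k - m)) $$ n"
    by (rule adic_sum_nth_set[OF cr, symmetric]) (auto simp: K_def intro: le_natI)
  finally show "adic_sum (\<lambda>m. adic_sum (\<lambda>j. F m j)) $$ n
      = adic_sum (\<lambda>k. \<Sum>m\<le>k. F m (k - m)) $$ n" .
qed

definition fls_cmap :: "('a \<Rightarrow> 'a) \<Rightarrow> 'a::zero fls \<Rightarrow> 'a fls" where
  "fls_cmap \<delta> f = Abs_fls (\<lambda>n. \<delta> (f $$ n))"

locale derivation =
  fixes \<delta> :: "'a::comm_ring_1 \<Rightarrow> 'a"
  assumes add: "\<delta> (a + b) = \<delta> a + \<delta> b"
    and mult: "\<delta> (a * b) = a * \<delta> b + \<delta> a * b"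
begin

lemma zero: "\<delta> 0 = 0"
  using add[of 0 0] by simp

lemma uminus: "\<delta> (- a) = - \<delta> a"
proof -
  have "\<delta> a + \<delta> (- a) = 0" using add[of a "- a"] zero by simp
  from add.inverse_unique[OF this] show ?thesis by simp
qed

lemma diff: "\<delta> (a - b) = \<delta> a - \<delta> b"
  using add[of a "- b"] by (simp add: uminus)

lemma sum: "\<delta> (\<Sum>x\<in>A. f x) = (\<Sum>x\<in>A. \<delta> (f x))"
  by (induction A rule: infinite_finite_induct) (simp_all add: zero add)

lemma fls_cmap_nth [simp]: "fls_cmap \<delta> f $$ n = \<delta> (f $$ n)"
  unfolding fls_cmap_def by (rule nth_Abs_fls_lower_bound[of "fls_subdegree f"]) (simp add: zero)

lemma vanishes_below_fls_cmap: "vanishes_below f c \<Longrightarrow> vanishes_below (fls_cmap \<delta> f) c"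
  by (simp add: vanishes_below_def zero)

lemma fls_cmap_add: "fls_cmap \<delta> (f + g) = fls_cmap \<delta> f + fls_cmap \<delta> g"
  by (rule fls_eqI) (simp add: add)

lemma fls_cmap_uminus: "fls_cmap \<delta> (- f) = - fls_cmap \<delta> f"
  by (rule fls_eqI) (simp add: uminus)

lemma fls_cmap_diff: "fls_cmap \<delta> (f - g) = fls_cmap \<delta> f - fls_cmap \<delta> g"
  by (rule fls_eqI) (simp add: diff)

lemma fls_cmap_const: "fls_cmap \<delta> (fls_const a) = fls_const (\<delta> a)"
  by (rule fls_eqI) (simp add: zero)

lemma fls_cmap_one: "fls_cmap \<delta> 1 = 0"
  using mult[of 1 1] by (intro fls_eqI) (simp add: zero)

lemma fls_cmap_mult: "fls_cmap \<delta> (f * g) = fls_cmap \<delta> f * g + f * fls_cmap \<delta> g"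
proof (rule fls_eqI)
  fix n
  define a b where "a = fls_subdegree f" and "b = fls_subdegree g"
  have f: "vanishes_below f a" "vanishes_below (fls_cmap \<delta> f) a"
    using vanishes_below_subdegree vanishes_below_fls_cmap a_def by blast+
  have g: "vanishes_below g b" "vanishes_below (fls_cmap \<delta> g) b"
    using vanishes_below_subdegree vanishes_below_fls_cmap b_def by blast+
  have "fls_cmap \<delta> (f * g) $$ n = \<delta> (\<Sum>i\<in>{a..n-b}. f $$ i * g $$ (n - i))"
    by (simp add: fls_times_nth_superset[OF f(1) g(1), of "{a..n-b}"])
  also have "\<dots> = (\<Sum>i\<in>{a..n-b}. fls_cmap \<delta> f $$ i * g $$ (n - i))
                 + (\<Sum>i\<in>{a..n-b}. f $$ i * fls_cmap \<delta> g $$ (n - i))"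
    by (simp add: sum mult sum.distrib algebra_simps)
  also have "\<dots> = (fls_cmap \<delta> f * g + f * fls_cmap \<delta> g) $$ n"
    by (simp add: fls_times_nth_superset[OF f(2) g(1), of "{a..n-b}"]
        fls_times_nth_superset[OF f(1) g(2), of "{a..n-b}"])
  finally show "fls_cmap \<delta> (f * g) $$ n = (fls_cmap \<delta> f * g + f * fls_cmap \<delta> g) $$ n" .
qed

lemma adic_summable_fls_cmap:
  "adic_summable S c \<Longrightarrow> adic_summable (\<lambda>m. fls_cmap \<delta> (S m)) c"
  by (simp add: adic_summable_def vanishes_below_fls_cmap)

lemma fls_cmap_adic_sum:
  "adic_summable S c \<Longrightarrow> fls_cmap \<delta> (adic_sum S) = adic_sum (\<lambda>m. fls_cmap \<delta> (S m))"
  by (rule fls_eqI) (simp add: adic_sum_nth[of S c] adic_sum_nth[OF adic_summable_fls_cmap] sum)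

end

type_synonym lser = "smooth fls"

interpretation pd_smooth: derivation "pd_smooth i"
  by standard simp_all

definition Du :: "nat \<Rightarrow> lser \<Rightarrow> lser" where
  "Du i = fls_cmap (pd_smooth i)"

lemma Du_nth [simp]: "Du i f $$ n = pd_smooth i (f $$ n)"
  unfolding Du_def by (rule pd_smooth.fls_cmap_nth)

lemma Du_add [simp]: "Du i (f + g) = Du i f + Du i g"
  unfolding Du_def by (rule pd_smooth.fls_cmap_add)

lemma Du_diff [simp]: "Du i (f - g) = Du i f - Du i g"
  unfolding Du_def by (rule pd_smooth.fls_cmap_diff)

lemma Du_uminus [simp]: "Du i (- f) = - Du i f"
  unfolding Du_def by (rule pd_smooth.fls_cmap_uminus)

lemma Du_mult [simp]: "Du i (f * g) = Du i f * g + f * Du i g"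
  unfolding Du_def by (rule pd_smooth.fls_cmap_mult)

lemma Du_const [simp]: "Du i (fls_const a) = fls_const (pd_smooth i a)"
  unfolding Du_def by (rule pd_smooth.fls_cmap_const)

lemma Du_zero [simp]: "Du i 0 = 0"
  by (rule fls_eqI) simp

lemma Du_one [simp]: "Du i 1 = 0"
  unfolding Du_def by (rule pd_smooth.fls_cmap_one)

lemma Du_X [simp]: "Du i fls_X = 0"
  by (rule fls_eqI) simp

lemma Du_X_inv [simp]: "Du i fls_X_inv = 0"
  by (rule fls_eqI) simp

lemma vanishes_below_Du: "vanishes_below f c \<Longrightarrow> vanishes_below (Du i f) c"
  unfolding Du_def by (rule pd_smooth.vanishes_below_fls_cmap)

lemma adic_summable_Du: "adic_summable S c \<Longrightarrow> adic_summable (\<lambda>m. Du i (S m)) c"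
  unfolding Du_def by (rule pd_smooth.adic_summable_fls_cmap)

lemma Du_adic_sum: "adic_summable S c \<Longrightarrow> Du i (adic_sum S) = adic_sum (\<lambda>m. Du i (S m))"
  unfolding Du_def by (rule pd_smooth.fls_cmap_adic_sum)

lemma Du_commute: "Du i (Du j f) = Du j (Du i f)"
  by (rule fls_eqI) (simp add: pd_smooth_commute)

text \<open>Since \<open>X = k\<^sup>-\<^sup>1\<close>, the derivative \<open>\<partial>\<^sub>k\<close> acts as \<open>-X\<^sup>2 \<partial>\<^sub>X\<close>.\<close>

definition Dk :: "'a::comm_ring_1 fls \<Rightarrow> 'a fls" where
  "Dk f = - (fls_X ^ 2 * fls_deriv f)"

lemma Dk_nth: "Dk f $$ n = - (of_int (n - 1) * f $$ (n - 1))"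
  by (simp add: Dk_def fls_X_power_times_conv_shift algebra_simps)

lemma Dk_add [simp]: "Dk (f + g) = Dk f + Dk g"
  by (simp add: Dk_def algebra_simps)

lemma Dk_diff [simp]: "Dk (f - g) = Dk f - Dk g"
  by (simp add: Dk_def algebra_simps)

lemma Dk_uminus [simp]: "Dk (- f) = - Dk f"
  by (simp add: Dk_def)

lemma Dk_mult [simp]: "Dk (f * g) = Dk f * g + f * Dk g"
  by (simp add: Dk_def algebra_simps)

lemma Dk_const [simp]: "Dk (fls_const a) = 0"
  by (simp add: Dk_def)

lemma Dk_zero [simp]: "Dk 0 = 0"
  by (simp add: Dk_def)

lemma Dk_one [simp]: "Dk 1 = 0"
  by (simp add: Dk_def)

lemma Dk_X_inv: "Dk (fls_X_inv :: 'a::comm_ring_1 fls) = 1"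
proof -
  have "Dk (fls_X_inv :: 'a fls) = (fls_X * fls_X_inv) ^ 2"
    by (simp add: Dk_def power_mult_distrib)
  then show ?thesis by (simp add: fls_X_times_X_inv)
qed

lemma vanishes_below_Dk: "vanishes_below f c \<Longrightarrow> vanishes_below (Dk f) (c + 1)"
  by (simp add: vanishes_below_def Dk_nth)

lemma adic_summable_Dk: "adic_summable S c \<Longrightarrow> adic_summable (\<lambda>m. Dk (S m)) (c + 1)"
  unfolding adic_summable_def using vanishes_below_Dk by (metis add.commute add.left_commute)

lemma Dk_adic_sum:
  assumes "adic_summable S c"
  shows "Dk (adic_sum S) = adic_sum (\<lambda>m. Dk (S m))"
proof (rule fls_eqI)
  fix n
  have "nat (n - 1 - c) = nat (n - (c + 1))" by simp
  then show "Dk (adic_sum S) $$ n = adic_sum (\<lambda>m. Dk (S m)) $$ n"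
    by (simp add: Dk_nth adic_sum_nth[OF assms] adic_sum_nth[OF adic_summable_Dk[OF assms]]
        sum_distrib_left sum_negf)
qed

lemma Du_Dk: "Du i (Dk f) = Dk (Du i f)"
  by (rule fls_eqI) (simp add: Dk_nth)
section \<open>The Poisson bracket and the dressing operator\<close>

definition Pbr :: "lser \<Rightarrow> lser \<Rightarrow> lser" where
  "Pbr f g = Dk f * Du vx g - Du vx f * Dk g"

abbreviation rscale :: "real \<Rightarrow> lser \<Rightarrow> lser" where
  "rscale r x \<equiv> fls_const (sconst r) * x"

lemma Pbr_add_right: "Pbr f (g + h) = Pbr f g + Pbr f h"
  by (simp add: Pbr_def algebra_simps)

lemma Pbr_add_left: "Pbr (g + h) f = Pbr g f + Pbr h f"
  by (simp add: Pbr_def algebra_simps)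


lemma Pbr_zero_right [simp]: "Pbr f 0 = 0"
  by (simp add: Pbr_def)

lemma Pbr_one_right [simp]: "Pbr f 1 = 0"
  by (simp add: Pbr_def)

lemma Pbr_sum_right: "Pbr f (\<Sum>x\<in>A. g x) = (\<Sum>x\<in>A. Pbr f (g x))"
  by (induction A rule: infinite_finite_induct) (simp_all add: Pbr_add_right)

lemma Pbr_mult_right: "Pbr f (g * h) = Pbr f g * h + g * Pbr f h"
  by (simp add: Pbr_def algebra_simps)


lemma Pbr_antisym: "Pbr f g = - Pbr g f"
  by (simp add: Pbr_def algebra_simps)

lemma Pbr_rscale_right: "Pbr f (rscale r g) = rscale r (Pbr f g)"
  by (simp add: Pbr_def algebra_simps)

lemma Pbr_rscale_left: "Pbr (rscale r g) f = rscale r (Pbr g f)"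
  by (simp add: Pbr_def algebra_simps)

lemma Pbr_X_inv_left: "Pbr fls_X_inv g = Du vx g"
  by (simp add: Pbr_def Dk_X_inv)

lemma Du_Pbr: "Du i (Pbr f g) = Pbr (Du i f) g + Pbr f (Du i g)"
  by (simp add: Pbr_def Du_Dk Du_commute[of i vx] algebra_simps)

lemma Pbr_Jacobi: "Pbr f (Pbr g h) = Pbr (Pbr f g) h + Pbr g (Pbr f h)"
  by (simp add: Pbr_def Du_Dk algebra_simps)

lemma vanishes_below_Pbr:
  assumes "vanishes_below f a" "vanishes_below g b"
  shows "vanishes_below (Pbr f g) (a + b + 1)"
proof -
  have "vanishes_below (Dk f * Du vx g) (a + 1 + b)" "vanishes_below (Du vx f * Dk g) (a + (b + 1))"
    using assms by (blast intro: vanishes_below_mult vanishes_below_Dk vanishes_below_Du)+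
  then show ?thesis
    unfolding Pbr_def by (intro vanishes_below_diff) (simp_all add: algebra_simps)
qed

lemma vanishes_below_Pbr0:
  "vanishes_below f 0 \<Longrightarrow> vanishes_below g c \<Longrightarrow> vanishes_below (Pbr f g) (c + 1)"
  using vanishes_below_Pbr[of f 0 g c] by simp

lemma adic_summable_Pbr_right:
  "vanishes_below f a \<Longrightarrow> adic_summable S c \<Longrightarrow> adic_summable (\<lambda>m. Pbr f (S m)) (a + c + 1)"
  unfolding adic_summable_def using vanishes_below_Pbr by (metis add.assoc add.commute)

lemma Pbr_adic_sum_right:
  assumes S: "adic_summable S c" and f: "vanishes_below f a"
  shows "Pbr f (adic_sum S) = adic_sum (\<lambda>m. Pbr f (S m))"
proof -
  have "Pbr f (adic_sum S) = adic_sum (\<lambda>m. Dk f * Du vx (S m)) - adic_sum (\<lambda>m. Du vx f * Dk (S m))"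
    unfolding Pbr_def Du_adic_sum[OF S] Dk_adic_sum[OF S]
    by (simp add: adic_sum_mult_left[OF adic_summable_Du[OF S] vanishes_below_Dk[OF f]]
        adic_sum_mult_left[OF adic_summable_Dk[OF S] vanishes_below_Du[OF f]])
  also have "\<dots> = adic_sum (\<lambda>m. Pbr f (S m))"
  proof -
    have "adic_summable (\<lambda>m. Dk f * Du vx (S m)) (a + 1 + c)"
      "adic_summable (\<lambda>m. Du vx f * Dk (S m)) (a + (c + 1))"
      by (intro adic_summable_mult_left vanishes_below_Dk vanishes_below_Du adic_summable_Du
          adic_summable_Dk f S)+
    then show ?thesis
      unfolding Pbr_def by (intro adic_sum_diff[symmetric]) (simp_all add: algebra_simps)
  qed
  finally show ?thesis .
qed

lemma Pbr_adic_sum_left: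
  assumes "adic_summable S c" "vanishes_below f a"
  shows "Pbr (adic_sum S) f = adic_sum (\<lambda>m. Pbr (S m) f)"
proof -
  have "Pbr (adic_sum S) f = - adic_sum (\<lambda>m. Pbr f (S m))"
    by (subst Pbr_antisym) (simp add: Pbr_adic_sum_right[OF assms])
  also have "\<dots> = adic_sum (\<lambda>m. - Pbr f (S m))"
    by (rule adic_sum_uminus[OF adic_summable_Pbr_right[OF assms(2,1)], symmetric])
  finally show ?thesis by (simp add: Pbr_antisym[of f])
qed

lemma rscale_rscale: "rscale a (rscale b x) = rscale (a * b) x"
  by (simp add: mult.assoc[symmetric] fls_const_mult_const sconst_mult)

lemma rscale_add_right: "rscale a (x + y) = rscale a x + rscale a y"
  by (simp add: distrib_left)

lemma of_nat_rscale: "of_nat n * x = rscale (real n) x"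
  by (simp add: fls_of_nat of_nat_smooth)

lemma rscale_sum_right: "rscale a (\<Sum>x\<in>A. f x) = (\<Sum>x\<in>A. rscale a (f x))"
  by (simp add: sum_distrib_left)

lemma rscale_mult_left: "rscale a x * y = rscale a (x * y)"
  by (simp add: mult.assoc)

lemma rscale_mult_right: "x * rscale a y = rscale a (x * y)"
  by (simp add: mult.left_commute)

lemma vanishes_below_rscale: "vanishes_below x c \<Longrightarrow> vanishes_below (rscale r x) c"
  using vanishes_below_mult[OF vanishes_below_const, of x c "sconst r"] by simp

lemma Du_rscale: "Du i (rscale r x) = rscale r (Du i x)"
  by simp

lemma adic_summable_rscale: "adic_summable S c \<Longrightarrow> adic_summable (\<lambda>m. rscale (a m) (S m)) c"
  unfolding adic_summable_def using vanishes_below_rscale by blast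

lemma Pbr_pow_zero [simp]: "(Pbr \<phi> ^^ m) 0 = 0"
  by (induction m) simp_all

lemma Pbr_pow_rscale: "(Pbr \<phi> ^^ m) (rscale r x) = rscale r ((Pbr \<phi> ^^ m) x)"
  by (induction m) (simp_all add: Pbr_rscale_right)

lemma Pbr_Pbr_pow_one: "Pbr \<phi> ((Pbr \<phi> ^^ m) 1) = 0"
  by (induction m) simp_all

lemma vanishes_below_Pbr_pow:
  "vanishes_below \<phi> 0 \<Longrightarrow> vanishes_below x c \<Longrightarrow> vanishes_below ((Pbr \<phi> ^^ m) x) (c + int m)"
proof (induction m)
  case (Suc m)
  then have "vanishes_below (Pbr \<phi> ((Pbr \<phi> ^^ m) x)) (c + int m + 1)"
    by (intro vanishes_below_Pbr0) auto
  then show ?case by (simp add: algebra_simps)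
qed simp

definition Exp_ad :: "lser \<Rightarrow> lser \<Rightarrow> lser" where
  "Exp_ad \<phi> X = adic_sum (\<lambda>m. rscale (1 / fact m) ((Pbr \<phi> ^^ m) X))"

definition Nabla :: "nat \<Rightarrow> lser \<Rightarrow> lser" where
  "Nabla i \<phi> = adic_sum (\<lambda>m. rscale (1 / fact (Suc m)) ((Pbr \<phi> ^^ m) (Du i \<phi>)))"

lemma adic_summable_rscale_Pbr_pow:
  "vanishes_below \<phi> 0 \<Longrightarrow> vanishes_below X c \<Longrightarrow> adic_summable (\<lambda>m. rscale (a m) ((Pbr \<phi> ^^ m) X)) c"
  by (intro adic_summable_rscale) (simp add: adic_summable_def vanishes_below_Pbr_pow)

lemma vanishes_below_Exp_ad:
  "vanishes_below \<phi> 0 \<Longrightarrow> vanishes_below X c \<Longrightarrow> vanishes_below (Exp_ad \<phi> X) c"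
  unfolding Exp_ad_def by (rule vanishes_below_adic_sum[OF adic_summable_rscale_Pbr_pow])

lemma vanishes_below_Nabla: "vanishes_below \<phi> 0 \<Longrightarrow> vanishes_below (Nabla i \<phi>) 0"
  unfolding Nabla_def
  by (rule vanishes_below_adic_sum[OF adic_summable_rscale_Pbr_pow[OF _ vanishes_below_Du]])

lemma Exp_ad_rscale:
  assumes "vanishes_below \<phi> 0" "vanishes_below X c"
  shows "Exp_ad \<phi> (rscale r X) = rscale r (Exp_ad \<phi> X)"
proof -
  have "rscale r (Exp_ad \<phi> X) = adic_sum (\<lambda>m. rscale r (rscale (1 / fact m) ((Pbr \<phi> ^^ m) X)))"
    unfolding Exp_ad_def
    by (rule adic_sum_mult_left[OF adic_summable_rscale_Pbr_pow[OF assms] vanishes_below_const])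
  also have "\<dots> = Exp_ad \<phi> (rscale r X)"
    unfolding Exp_ad_def Pbr_pow_rscale rscale_rscale by (simp add: mult.commute)
  finally show ?thesis by simp
qed

lemma vanishes_below_Exp_ad_tail:
  assumes "vanishes_below \<phi> 0" "vanishes_below X c"
  shows "vanishes_below (Exp_ad \<phi> X - X) (c + 1)"
  using vanishes_below_adic_sum_tail[OF adic_summable_rscale_Pbr_pow[OF assms, of "\<lambda>m. 1 / fact m"]]
  by (simp add: Exp_ad_def)

lemma Nabla_nth_0:
  assumes "vanishes_below \<phi> 0"
  shows "Nabla u \<phi> $$ 0 = pd_smooth u (\<phi> $$ 0)"
proof -
  have "adic_summable (\<lambda>m. rscale (1 / fact (Suc m)) ((Pbr \<phi> ^^ m) (Du u \<phi>))) 0"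
    by (rule adic_summable_rscale_Pbr_pow[OF assms vanishes_below_Du[OF assms]])
  from vanishes_below_adic_sum_tail[OF this] show ?thesis
    by (simp add: Nabla_def vanishes_below_def)
qed

lemma Exp_ad_one: "vanishes_below \<phi> 0 \<Longrightarrow> Exp_ad \<phi> 1 = 1"
  unfolding Exp_ad_def
  by (subst adic_sum_shift[OF adic_summable_rscale_Pbr_pow[OF _ vanishes_below_1]])
    (simp_all add: Pbr_Pbr_pow_one)

lemma Exp_ad_zero: "Exp_ad \<phi> 0 = 0"
  unfolding Exp_ad_def by simp

lemma iterated_leibniz:
  fixes D :: "'a::comm_ring_1 \<Rightarrow> 'a" and T :: "nat \<Rightarrow> nat \<Rightarrow> 'a"
  assumes Dadd: "\<And>x y. D (x + y) = D x + D y"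
    and Dsc: "\<And>c x. D (of_nat c * x) = of_nat c * D x"
    and DT: "\<And>i j. D (T i j) = T (Suc i) j + T i (Suc j)"
  shows "(D ^^ n) (T 0 0) = (\<Sum>k\<le>n. of_nat (n choose k) * T k (n - k))"
proof (induction n)
  case 0 then show ?case by simp
next
  case (Suc n)
  have D0: "D 0 = 0" using Dadd[of 0 0] by simp
  have Dsum: "D (\<Sum>k\<in>A. f k) = (\<Sum>k\<in>A. D (f k))" for A and f :: "nat \<Rightarrow> 'a"
    by (induction A rule: infinite_finite_induct) (simp_all add: D0 Dadd)
  have "(D ^^ Suc n) (T 0 0) = D (\<Sum>k\<le>n. of_nat (n choose k) * T k (n - k))"
    using Suc by simp
  also have "\<dots> = (\<Sum>k\<le>n. of_nat (n choose k) * T (Suc k) (n - k))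
                 + (\<Sum>k\<le>n. of_nat (n choose k) * T k (Suc (n - k)))"
    by (simp add: Dsum Dsc DT distrib_left sum.distrib)
  also have "(\<Sum>k\<le>n. of_nat (n choose k) * T k (Suc (n - k)))
      = (\<Sum>k\<le>Suc n. of_nat (n choose k) * T k (Suc n - k))"
  proof -
    have "(\<Sum>k\<le>Suc n. of_nat (n choose k) * T k (Suc n - k))
        = (\<Sum>k\<le>n. of_nat (n choose k) * T k (Suc n - k))"
      by (simp add: sum.atMost_Suc binomial_eq_0)
    also have "\<dots> = (\<Sum>k\<le>n. of_nat (n choose k) * T k (Suc (n - k)))"
      by (rule sum.cong) (auto simp: Suc_diff_le)
    finally show ?thesis by simp
  qed
  also have "(\<Sum>k\<le>Suc n. of_nat (n choose k) * T k (Suc n - k))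
      = T 0 (Suc n) + (\<Sum>k\<le>n. of_nat (n choose Suc k) * T (Suc k) (n - k))"
    by (subst sum.atMost_Suc_shift) simp
  finally have "(D ^^ Suc n) (T 0 0)
      = T 0 (Suc n) + (\<Sum>k\<le>n. (of_nat (n choose k) + of_nat (n choose Suc k)) * T (Suc k) (n - k))"
    by (simp add: distrib_right sum.distrib algebra_simps)
  also have "\<dots> = (\<Sum>k\<le>Suc n. of_nat (Suc n choose k) * T k (Suc n - k))"
    by (subst sum.atMost_Suc_shift) (simp add: binomial_Suc_Suc)
  finally show ?case .
qed

lemma inverse_fact_mult_choose:
  "k \<le> n \<Longrightarrow> 1 / fact n * real (n choose k) = 1 / fact k * (1 / fact (n - k))"
  by (simp add: binomial_fact)

lemma choose_divide_fact: "k \<le> n \<Longrightarrow> real (n choose k) / fact n = 1 / (fact (n - k) * fact k)"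
  by (simp add: binomial_fact)

text \<open>A bilinear operation, continuous for the \<open>X\<close>-adic topology, on which \<open>ad \<phi>\<close> acts as a
  derivation.  By the binomial Leibniz rule and a Cauchy-product rearrangement, \<open>exp (ad \<phi>)\<close>
  then preserves it.\<close>

locale ad_derivation_bilinear =
  fixes \<beta> :: "lser \<Rightarrow> lser \<Rightarrow> lser" and \<phi> :: lser
  assumes phi: "vanishes_below \<phi> 0"
    and add_left: "\<And>x y z. \<beta> (x + y) z = \<beta> x z + \<beta> y z"
    and add_right: "\<And>x y z. \<beta> z (x + y) = \<beta> z x + \<beta> z y"
    and rscale_left: "\<And>r x y. \<beta> (rscale r x) y = rscale r (\<beta> x y)"
    and rscale_right: "\<And>r x y. \<beta> x (rscale r y) = rscale r (\<beta> x y)"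
    and vanishes_below: "\<And>x y a b. vanishes_below x a \<Longrightarrow> vanishes_below y b \<Longrightarrow>
                          vanishes_below (\<beta> x y) (a + b)"
    and adic_sum_left: "\<And>S c f a. adic_summable S c \<Longrightarrow> vanishes_below f a \<Longrightarrow>
                          \<beta> (adic_sum S) f = adic_sum (\<lambda>m. \<beta> (S m) f)"
    and adic_sum_right: "\<And>S c f a. adic_summable S c \<Longrightarrow> vanishes_below f a \<Longrightarrow>
                          \<beta> f (adic_sum S) = adic_sum (\<lambda>m. \<beta> f (S m))"
    and Pbr_Leibniz: "\<And>x y. Pbr \<phi> (\<beta> x y) = \<beta> (Pbr \<phi> x) y + \<beta> x (Pbr \<phi> y)"
begin

lemma Pbr_pow_beta:
  "(Pbr \<phi> ^^ n) (\<beta> F G) = (\<Sum>k\<le>n. of_nat (n choose k) * \<beta> ((Pbr \<phi> ^^ k) F) ((Pbr \<phi> ^^ (n - k)) G))"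
proof -
  have "(Pbr \<phi> ^^ n) ((\<lambda>i j. \<beta> ((Pbr \<phi> ^^ i) F) ((Pbr \<phi> ^^ j) G)) 0 0)
      = (\<Sum>k\<le>n. of_nat (n choose k) * (\<lambda>i j. \<beta> ((Pbr \<phi> ^^ i) F) ((Pbr \<phi> ^^ j) G)) k (n - k))"
    by (rule iterated_leibniz) (simp_all add: Pbr_add_right of_nat_rscale Pbr_rscale_right Pbr_Leibniz)
  then show ?thesis by simp
qed

theorem Exp_ad_beta:
  assumes F: "vanishes_below F a" and G: "vanishes_below G b"
  shows "Exp_ad \<phi> (\<beta> F G) = \<beta> (Exp_ad \<phi> F) (Exp_ad \<phi> G)"
proof -
  define aF where "aF i = rscale (1 / fact i) ((Pbr \<phi> ^^ i) F)" for i
  define bG where "bG j = rscale (1 / fact j) ((Pbr \<phi> ^^ j) G)" for j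
  have ca: "adic_summable aF a"
    unfolding aF_def by (rule adic_summable_rscale_Pbr_pow[OF phi F])
  have cb: "adic_summable bG b"
    unfolding bG_def by (rule adic_summable_rscale_Pbr_pow[OF phi G])
  have la: "vanishes_below (aF i) (a + int i)" for i using ca by (simp add: adic_summable_def)
  have lb: "vanishes_below (bG j) (b + int j)" for j using cb by (simp add: adic_summable_def)
  have lsb: "vanishes_below (adic_sum bG) b" by (rule vanishes_below_adic_sum[OF cb])
  have "\<beta> (Exp_ad \<phi> F) (Exp_ad \<phi> G) = \<beta> (adic_sum aF) (adic_sum bG)"
    unfolding Exp_ad_def aF_def bG_def by simp
  also have "\<dots> = adic_sum (\<lambda>i. \<beta> (aF i) (adic_sum bG))"
    by (rule adic_sum_left[OF ca lsb])
  also have "\<dots> = adic_sum (\<lambda>i. adic_sum (\<lambda>j. \<beta> (aF i) (bG j)))"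
    by (rule adic_sum_cong) (rule adic_sum_right[OF cb la])
  also have "\<dots> = adic_sum (\<lambda>n. \<Sum>i\<le>n. \<beta> (aF i) (bG (n - i)))"
  proof (rule adic_sum_fubini)
    fix i j
    show "vanishes_below (\<beta> (aF i) (bG j)) (a + b + int i + int j)"
      using vanishes_below[OF la lb] by (simp add: algebra_simps)
  qed
  also have "\<dots> = Exp_ad \<phi> (\<beta> F G)"
    unfolding Exp_ad_def
  proof (rule adic_sum_cong)
    fix n
    have "rscale (1 / fact n) ((Pbr \<phi> ^^ n) (\<beta> F G))
        = (\<Sum>k\<le>n. rscale (1 / fact n * real (n choose k))
                      (\<beta> ((Pbr \<phi> ^^ k) F) ((Pbr \<phi> ^^ (n - k)) G)))"
      by (simp add: Pbr_pow_beta rscale_sum_right of_nat_rscale rscale_rscale)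
    also have "\<dots> = (\<Sum>k\<le>n. \<beta> (aF k) (bG (n - k)))"
      by (rule sum.cong)
        (simp_all add: aF_def bG_def rscale_left rscale_right rscale_rscale choose_divide_fact)
    finally show "(\<Sum>i\<le>n. \<beta> (aF i) (bG (n - i))) = rscale (1 / fact n) ((Pbr \<phi> ^^ n) (\<beta> F G))"
      by simp
  qed
  finally show ?thesis by simp
qed

end

lemma ad_derivation_bilinear_mult: "vanishes_below \<phi> 0 \<Longrightarrow> ad_derivation_bilinear (*) \<phi>"
  by unfold_locales
    (simp_all add: distrib_left distrib_right rscale_mult_left rscale_mult_right vanishes_below_mult
      adic_sum_mult_left adic_sum_mult_right Pbr_mult_right)

lemma ad_derivation_bilinear_Pbr: "vanishes_below \<phi> 0 \<Longrightarrow> ad_derivation_bilinear Pbr \<phi>"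
proof unfold_locales
  fix x y :: lser and a b assume "vanishes_below x a" "vanishes_below y b"
  from vanishes_below_Pbr[OF this] show "vanishes_below (Pbr x y) (a + b)"
    by (rule vanishes_below_mono) simp
next
  fix S :: "nat \<Rightarrow> lser" and f :: lser and c a assume "adic_summable S c" "vanishes_below f a"
  then show "Pbr (adic_sum S) f = adic_sum (\<lambda>m. Pbr (S m) f)" by (rule Pbr_adic_sum_left)
next
  fix S :: "nat \<Rightarrow> lser" and f :: lser and c a assume "adic_summable S c" "vanishes_below f a"
  then show "Pbr f (adic_sum S) = adic_sum (\<lambda>m. Pbr f (S m))" by (rule Pbr_adic_sum_right)
next
  fix x y
  show "Pbr \<phi> (Pbr x y) = Pbr (Pbr \<phi> x) y + Pbr x (Pbr \<phi> y)" by (rule Pbr_Jacobi)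
qed (simp_all add: Pbr_add_left Pbr_add_right Pbr_rscale_left Pbr_rscale_right)

lemma Exp_ad_mult:
  "vanishes_below \<phi> 0 \<Longrightarrow> vanishes_below F a \<Longrightarrow> vanishes_below G b \<Longrightarrow>
     Exp_ad \<phi> (F * G) = Exp_ad \<phi> F * Exp_ad \<phi> G"
  using ad_derivation_bilinear.Exp_ad_beta[OF ad_derivation_bilinear_mult] by blast

lemma Exp_ad_Pbr:
  "vanishes_below \<phi> 0 \<Longrightarrow> vanishes_below F a \<Longrightarrow> vanishes_below G b \<Longrightarrow>
     Exp_ad \<phi> (Pbr F G) = Pbr (Exp_ad \<phi> F) (Exp_ad \<phi> G)"
  using ad_derivation_bilinear.Exp_ad_beta[OF ad_derivation_bilinear_Pbr] by blast

lemma Du_Pbr_pow: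
  "Du u ((Pbr \<phi> ^^ n) X) = (Pbr \<phi> ^^ n) (Du u X)
     + (\<Sum>i<n. (Pbr \<phi> ^^ i) (Pbr (Du u \<phi>) ((Pbr \<phi> ^^ (n - Suc i)) X)))"
proof (induction n)
  case 0 then show ?case by simp
next
  case (Suc n)
  have A: "Du u ((Pbr \<phi> ^^ Suc n) X) = Pbr (Du u \<phi>) ((Pbr \<phi> ^^ n) X) + (Pbr \<phi> ^^ Suc n) (Du u X)
      + (\<Sum>i<n. (Pbr \<phi> ^^ Suc i) (Pbr (Du u \<phi>) ((Pbr \<phi> ^^ (n - Suc i)) X)))"
    by (simp add: Du_Pbr Suc.IH Pbr_add_right Pbr_sum_right)
  have B: "(\<Sum>i<Suc n. (Pbr \<phi> ^^ i) (Pbr (Du u \<phi>) ((Pbr \<phi> ^^ (Suc n - Suc i)) X)))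
      = Pbr (Du u \<phi>) ((Pbr \<phi> ^^ n) X)
        + (\<Sum>i<n. (Pbr \<phi> ^^ Suc i) (Pbr (Du u \<phi>) ((Pbr \<phi> ^^ (n - Suc i)) X)))"
    by (subst sum.lessThan_Suc_shift) simp
  show ?case unfolding A B by (simp only: add.assoc add.commute add.left_commute)
qed

lemma Pbr_of_nat_right: "Pbr f (of_nat c * g) = of_nat c * Pbr f g"
  by (simp add: of_nat_rscale Pbr_rscale_right)

lemma Pbr_binomial_commutator_sum:
  "Pbr \<phi> (\<Sum>m<n. of_nat (n choose Suc m) * Pbr ((Pbr \<phi> ^^ m) \<psi>) ((Pbr \<phi> ^^ (n - Suc m)) X))
     = (\<Sum>m<n. of_nat (n choose Suc m) * Pbr ((Pbr \<phi> ^^ Suc m) \<psi>) ((Pbr \<phi> ^^ (n - Suc m)) X))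
       + (\<Sum>m<n. of_nat (n choose Suc m) * Pbr ((Pbr \<phi> ^^ m) \<psi>) ((Pbr \<phi> ^^ (n - m)) X))"
proof -
  have "Pbr \<phi> ((Pbr \<phi> ^^ (n - Suc m)) X) = (Pbr \<phi> ^^ (n - m)) X" if "m < n" for m
  proof -
    have "n - m = Suc (n - Suc m)" using that by simp
    then show ?thesis by simp
  qed
  then have "Pbr \<phi> (\<Sum>m<n. of_nat (n choose Suc m) * Pbr ((Pbr \<phi> ^^ m) \<psi>) ((Pbr \<phi> ^^ (n - Suc m)) X))
      = (\<Sum>m<n. of_nat (n choose Suc m) * (Pbr ((Pbr \<phi> ^^ Suc m) \<psi>) ((Pbr \<phi> ^^ (n - Suc m)) X)
           + Pbr ((Pbr \<phi> ^^ m) \<psi>) ((Pbr \<phi> ^^ (n - m)) X)))"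
    unfolding Pbr_sum_right Pbr_of_nat_right by (intro sum.cong) (simp_all add: Pbr_Jacobi[of \<phi>])
  then show ?thesis by (simp add: distrib_left sum.distrib)
qed

lemma Pbr_pow_commutator_sum:
  "(\<Sum>i<n. (Pbr \<phi> ^^ i) (Pbr \<psi> ((Pbr \<phi> ^^ (n - Suc i)) X)))
   = (\<Sum>m<n. of_nat (n choose Suc m) * Pbr ((Pbr \<phi> ^^ m) \<psi>) ((Pbr \<phi> ^^ (n - Suc m)) X))"
proof (induction n)
  case 0 show ?case by simp
next
  case (Suc n)
  have T: "(\<Sum>i<Suc n. (Pbr \<phi> ^^ i) (Pbr \<psi> ((Pbr \<phi> ^^ (Suc n - Suc i)) X)))
      = Pbr \<psi> ((Pbr \<phi> ^^ n) X) + Pbr \<phi> (\<Sum>i<n. (Pbr \<phi> ^^ i) (Pbr \<psi> ((Pbr \<phi> ^^ (n - Suc i)) X)))"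
    by (subst sum.lessThan_Suc_shift) (simp add: Pbr_sum_right)
  have S1: "(\<Sum>m<Suc n. of_nat (n choose m) * Pbr ((Pbr \<phi> ^^ m) \<psi>) ((Pbr \<phi> ^^ (n - m)) X))
      = Pbr \<psi> ((Pbr \<phi> ^^ n) X)
        + (\<Sum>m<n. of_nat (n choose Suc m) * Pbr ((Pbr \<phi> ^^ Suc m) \<psi>) ((Pbr \<phi> ^^ (n - Suc m)) X))"
    by (subst sum.lessThan_Suc_shift) simp
  have S2: "(\<Sum>m<Suc n. of_nat (n choose Suc m) * Pbr ((Pbr \<phi> ^^ m) \<psi>) ((Pbr \<phi> ^^ (n - m)) X))
      = (\<Sum>m<n. of_nat (n choose Suc m) * Pbr ((Pbr \<phi> ^^ m) \<psi>) ((Pbr \<phi> ^^ (n - m)) X))"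
    by (simp add: binomial_eq_0)
  have "(\<Sum>m<Suc n. of_nat (Suc n choose Suc m) * Pbr ((Pbr \<phi> ^^ m) \<psi>) ((Pbr \<phi> ^^ (Suc n - Suc m)) X))
     = (\<Sum>m<Suc n. of_nat (n choose m) * Pbr ((Pbr \<phi> ^^ m) \<psi>) ((Pbr \<phi> ^^ (n - m)) X))
     + (\<Sum>m<Suc n. of_nat (n choose Suc m) * Pbr ((Pbr \<phi> ^^ m) \<psi>) ((Pbr \<phi> ^^ (n - m)) X))"
    by (simp only: binomial_Suc_Suc diff_Suc_Suc of_nat_add distrib_right sum.distrib)
  also have "\<dots> = Pbr \<psi> ((Pbr \<phi> ^^ n) X)
      + Pbr \<phi> (\<Sum>m<n. of_nat (n choose Suc m) * Pbr ((Pbr \<phi> ^^ m) \<psi>) ((Pbr \<phi> ^^ (n - Suc m)) X))"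
    unfolding S1 S2 Pbr_binomial_commutator_sum by (simp only: add.assoc)
  also have "\<dots> = (\<Sum>i<Suc n. (Pbr \<phi> ^^ i) (Pbr \<psi> ((Pbr \<phi> ^^ (Suc n - Suc i)) X)))"
    unfolding T Suc.IH ..
  finally show ?case by simp
qed

lemma vanishes_below_commutator_sum:
  assumes \<phi>: "vanishes_below \<phi> 0" and \<psi>: "vanishes_below \<psi> 0" and X: "vanishes_below X c"
  shows "vanishes_below (\<Sum>i<n. (Pbr \<phi> ^^ i) (Pbr \<psi> ((Pbr \<phi> ^^ (n - Suc i)) X))) (c + int n)"
proof (intro vanishes_below_sum)
  fix i assume "i \<in> {..<n}"
  then have "c + int (n - Suc i) + 1 + int i = c + int n" by auto
  moreover have "vanishes_below ((Pbr \<phi> ^^ i) (Pbr \<psi> ((Pbr \<phi> ^^ (n - Suc i)) X)))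
      (c + int (n - Suc i) + 1 + int i)"
    by (intro vanishes_below_Pbr_pow vanishes_below_Pbr0 \<phi> \<psi> X)
  ultimately show "vanishes_below ((Pbr \<phi> ^^ i) (Pbr \<psi> ((Pbr \<phi> ^^ (n - Suc i)) X))) (c + int n)"
    by simp
qed

lemma rscale_commutator_sum:
  "rscale (1 / fact (Suc n)) (\<Sum>i<Suc n. (Pbr \<phi> ^^ i) (Pbr \<psi> ((Pbr \<phi> ^^ (Suc n - Suc i)) X)))
     = (\<Sum>m\<le>n. Pbr (rscale (1 / fact (Suc m)) ((Pbr \<phi> ^^ m) \<psi>))
                    (rscale (1 / fact (n - m)) ((Pbr \<phi> ^^ (n - m)) X)))"
proof -
  have "rscale (1 / fact (Suc n))
        (of_nat (Suc n choose Suc m) * Pbr ((Pbr \<phi> ^^ m) \<psi>) ((Pbr \<phi> ^^ (Suc n - Suc m)) X))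
      = Pbr (rscale (1 / fact (Suc m)) ((Pbr \<phi> ^^ m) \<psi>))
            (rscale (1 / fact (n - m)) ((Pbr \<phi> ^^ (n - m)) X))"
    if "m \<le> n" for m
  proof -
    have "1 / fact (Suc n) * real (Suc n choose Suc m) = 1 / fact (n - m) * (1 / fact (Suc m))"
      using inverse_fact_mult_choose[of "Suc m" "Suc n"] that by simp
    then show ?thesis
      by (simp only: of_nat_rscale rscale_rscale diff_Suc_Suc Pbr_rscale_left Pbr_rscale_right)
  qed
  then show ?thesis
    unfolding Pbr_pow_commutator_sum rscale_sum_right
    unfolding lessThan_Suc_atMost by (intro sum.cong) simp_all
qed

text \<open>The series form of the classical formula for the derivative of the exponential map.\<close>

lemma adic_sum_commutator_sums:
  assumes \<phi>: "vanishes_below \<phi> 0" and \<psi>: "vanishes_below \<psi> 0" and X: "vanishes_below X c"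
  shows "adic_sum (\<lambda>n. rscale (1 / fact n) (\<Sum>i<n. (Pbr \<phi> ^^ i) (Pbr \<psi> ((Pbr \<phi> ^^ (n - Suc i)) X))))
           = Pbr (adic_sum (\<lambda>m. rscale (1 / fact (Suc m)) ((Pbr \<phi> ^^ m) \<psi>))) (Exp_ad \<phi> X)"
    (is "adic_sum (\<lambda>n. rscale (1 / fact n) (?T n)) = _")
proof -
  define G where "G m j = Pbr (rscale (1 / fact (Suc m)) ((Pbr \<phi> ^^ m) \<psi>))
                              (rscale (1 / fact j) ((Pbr \<phi> ^^ j) X))" for m j
  have G: "vanishes_below (G m j) (c + int m + int j)" for m j
  proof -
    have "vanishes_below (G m j) (0 + int m + (c + int j) + 1)"
      unfolding G_def by (intro vanishes_below_Pbr vanishes_below_rscale vanishes_below_Pbr_pow \<phi> \<psi> X)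
    then show ?thesis by (rule vanishes_below_mono) simp
  qed
  have "adic_summable (\<lambda>n. rscale (1 / fact n) (?T n)) c"
    unfolding adic_summable_def
    using vanishes_below_commutator_sum[OF \<phi> \<psi> X] vanishes_below_rscale by blast
  then have "adic_sum (\<lambda>n. rscale (1 / fact n) (?T n))
      = adic_sum (\<lambda>n. rscale (1 / fact (Suc n)) (?T (Suc n)))"
    by (subst adic_sum_shift) simp_all
  also have "\<dots> = adic_sum (\<lambda>n. \<Sum>m\<le>n. G m (n - m))"
    by (simp only: rscale_commutator_sum G_def)
  also have "\<dots> = adic_sum (\<lambda>m. adic_sum (\<lambda>j. G m j))"
    by (rule adic_sum_fubini[OF G, symmetric])
  also have "\<dots> = adic_sum (\<lambda>m. Pbr (rscale (1 / fact (Suc m)) ((Pbr \<phi> ^^ m) \<psi>)) (Exp_ad \<phi> X))"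
  proof (rule adic_sum_cong)
    fix m
    have "vanishes_below (rscale (1 / fact (Suc m)) ((Pbr \<phi> ^^ m) \<psi>)) (0 + int m)"
      by (intro vanishes_below_rscale vanishes_below_Pbr_pow \<phi> \<psi>)
    then show "adic_sum (G m) = Pbr (rscale (1 / fact (Suc m)) ((Pbr \<phi> ^^ m) \<psi>)) (Exp_ad \<phi> X)"
      unfolding Exp_ad_def G_def
      by (rule Pbr_adic_sum_right[OF adic_summable_rscale_Pbr_pow[OF \<phi> X], symmetric])
  qed
  also have "\<dots> = Pbr (adic_sum (\<lambda>m. rscale (1 / fact (Suc m)) ((Pbr \<phi> ^^ m) \<psi>))) (Exp_ad \<phi> X)"
    by (rule Pbr_adic_sum_left[OF adic_summable_rscale_Pbr_pow[OF \<phi> \<psi>] vanishes_below_Exp_ad[OF \<phi> X],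
          symmetric])
  finally show ?thesis .
qed

theorem Du_Exp_ad:
  assumes \<phi>: "vanishes_below \<phi> 0" and X: "vanishes_below X c"
  shows "Du u (Exp_ad \<phi> X) = Exp_ad \<phi> (Du u X) + Pbr (Nabla u \<phi>) (Exp_ad \<phi> X)"
proof -
  have \<psi>: "vanishes_below (Du u \<phi>) 0" by (rule vanishes_below_Du[OF \<phi>])
  define T where "T n = (\<Sum>i<n. (Pbr \<phi> ^^ i) (Pbr (Du u \<phi>) ((Pbr \<phi> ^^ (n - Suc i)) X)))" for n
  have "adic_summable (\<lambda>n. rscale (1 / fact n) (T n)) c"
    unfolding adic_summable_def T_def
    using vanishes_below_commutator_sum[OF \<phi> \<psi> X] vanishes_below_rscale by blast
  then have "Du u (Exp_ad \<phi> X) = adic_sum (\<lambda>n. rscale (1 / fact n) ((Pbr \<phi> ^^ n) (Du u X)))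
                                  + adic_sum (\<lambda>n. rscale (1 / fact n) (T n))"
    unfolding Exp_ad_def Du_adic_sum[OF adic_summable_rscale_Pbr_pow[OF \<phi> X]]
    by (simp only: Du_rscale Du_Pbr_pow T_def rscale_add_right
        adic_sum_add[OF adic_summable_rscale_Pbr_pow[OF \<phi> vanishes_below_Du[OF X]]])
  then show ?thesis
    unfolding T_def adic_sum_commutator_sums[OF \<phi> \<psi> X] by (simp add: Exp_ad_def Nabla_def)
qed

section \<open>Expansions in powers of the inverse Lax function\<close>

lemma derivation_of_inverse:
  fixes D :: "'a::comm_ring_1 \<Rightarrow> 'a"
  assumes mult: "\<And>x y. D (x * y) = D x * y + x * D y" and fg: "f * g = 1"
  shows "D g = - (g ^ 2 * D f)"
proof -
  have "D 1 = 0" using mult[of 1 1] by simp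
  then have "g * (D f * g + f * D g) = 0" using mult[of f g] fg by simp
  then have "g ^ 2 * D f + (f * g) * D g = 0" by (simp add: algebra_simps power2_eq_square)
  then show ?thesis using fg by (simp add: eq_neg_iff_add_eq_0 add.commute)
qed

lemma derivation_of_inverse_power:
  fixes D :: "'a::comm_ring_1 \<Rightarrow> 'a"
  assumes mult: "\<And>x y. D (x * y) = D x * y + x * D y" and fg: "f * g = 1"
  shows "D (g ^ m) = - (of_nat m * g ^ Suc m * D f)"
proof (induction m)
  case 0
  show ?case using mult[of 1 1] by simp
next
  case (Suc m)
  then show ?case
    using derivation_of_inverse[OF mult fg] by (simp add: mult algebra_simps power2_eq_square)
qed

lemma fls_const_neg_of_nat_mult:
  "fls_const (- (of_nat m * (c :: 'a::comm_ring_1))) * Y * Z = fls_const c * (- (of_nat m * Y * Z))"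
proof -
  have "fls_const (- (of_nat m * c)) = - (of_nat m * fls_const c)"
    by (metis fls_const_mult_const fls_const_uminus fls_of_nat)
  then show ?thesis by (simp add: algebra_simps)
qed

definition Lax :: "lser \<Rightarrow> lser" where
  "Lax \<phi> = Exp_ad \<phi> fls_X_inv"

definition Lax_inv :: "lser \<Rightarrow> lser" where
  "Lax_inv \<phi> = Exp_ad \<phi> fls_X"

definition Lax_neg_pow :: "lser \<Rightarrow> nat \<Rightarrow> lser" where
  "Lax_neg_pow \<phi> m = Lax_inv \<phi> ^ m"

definition Lax_expansion :: "lser \<Rightarrow> (nat \<Rightarrow> smooth) \<Rightarrow> lser" where
  "Lax_expansion \<phi> a = adic_sum (\<lambda>m. fls_const (a m) * Lax_neg_pow \<phi> m)"

text \<open>The coefficients of \<open>\<partial>\<^sub>L (\<Sum>\<^sub>m a\<^sub>m L\<^sup>-\<^sup>m) = \<Sum>\<^sub>m (-m a\<^sub>m) L\<^sup>-\<^sup>m\<^sup>-\<^sup>1\<close>.\<close>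

definition dLax_coeffs :: "(nat \<Rightarrow> smooth) \<Rightarrow> nat \<Rightarrow> smooth" where
  "dLax_coeffs a m = (case m of 0 \<Rightarrow> 0 | Suc k \<Rightarrow> - (of_nat k * a k))"

definition undressed_OS :: "real \<Rightarrow> lser" where
  "undressed_OS N = fls_const (scoord vx) + fls_const (sconst N * scoord vs) * fls_X"

lemma vanishes_below_undressed_OS: "vanishes_below (undressed_OS N) 0"
  unfolding undressed_OS_def using vanishes_below_mult[OF vanishes_below_const vanishes_below_X]
  by (intro vanishes_below_add vanishes_below_const) (rule vanishes_below_mono, auto)

context
  fixes \<phi> :: lser
  assumes \<phi>: "vanishes_below \<phi> 0"
begin

lemma Lax_Lax_inv: "Lax \<phi> * Lax_inv \<phi> = 1"
proof -
  have "fls_X_inv * fls_X = (1 :: lser)"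
    using fls_X_times_X_inv by (simp add: mult.commute)
  then show ?thesis
    using Exp_ad_mult[OF \<phi> vanishes_below_X_inv vanishes_below_X] Exp_ad_one[OF \<phi>]
    by (simp add: Lax_def Lax_inv_def)
qed

lemma vanishes_below_Lax: "vanishes_below (Lax \<phi>) (-1)"
  unfolding Lax_def by (rule vanishes_below_Exp_ad[OF \<phi> vanishes_below_X_inv])

lemma vanishes_below_Lax_inv: "vanishes_below (Lax_inv \<phi>) 1"
  unfolding Lax_inv_def by (rule vanishes_below_Exp_ad[OF \<phi> vanishes_below_X])

lemma Lax_inv_nth_1: "Lax_inv \<phi> $$ 1 = 1"
  using vanishes_belowD[OF vanishes_below_Exp_ad_tail[OF \<phi> vanishes_below_X], of 1]
  by (simp add: Lax_inv_def)

lemma vanishes_below_Lax_neg_pow: "vanishes_below (Lax_neg_pow \<phi> m) (int m)"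
  unfolding Lax_neg_pow_def using vanishes_below_power[OF vanishes_below_Lax_inv, of m] by simp

lemma Lax_neg_pow_nth_lowest: "Lax_neg_pow \<phi> m $$ int m = 1"
proof (induction m)
  case (Suc m)
  have "Lax_neg_pow \<phi> (Suc m) $$ (1 + int m) = Lax_inv \<phi> $$ 1 * Lax_neg_pow \<phi> m $$ int m"
    unfolding Lax_neg_pow_def power_Suc
    by (rule fls_times_nth_low[OF vanishes_below_Lax_inv
          vanishes_below_Lax_neg_pow[unfolded Lax_neg_pow_def]])
  then show ?case using Suc Lax_inv_nth_1 by simp
qed (simp add: Lax_neg_pow_def)

lemma vanishes_below_const_Lax_neg_pow: "vanishes_below (fls_const a * Lax_neg_pow \<phi> m) (int m)"
  using vanishes_below_mult[OF vanishes_below_const vanishes_below_Lax_neg_pow, of a m] by simp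

lemma adic_summable_Lax_expansion: "adic_summable (\<lambda>m. fls_const (a m) * Lax_neg_pow \<phi> m) 0"
  unfolding adic_summable_def using vanishes_below_const_Lax_neg_pow by simp

lemma vanishes_below_Lax_expansion: "vanishes_below (Lax_expansion \<phi> a) 0"
  unfolding Lax_expansion_def by (rule vanishes_below_adic_sum[OF adic_summable_Lax_expansion])

lemma Lax_expansion_nth:
  "Lax_expansion \<phi> a $$ int m = a m + (\<Sum>i<m. a i * Lax_neg_pow \<phi> i $$ int m)"
  by (simp add: Lax_expansion_def adic_sum_nth[OF adic_summable_Lax_expansion]
      lessThan_Suc_atMost[symmetric] Lax_neg_pow_nth_lowest)

lemma Lax_expansion_nth_0: "Lax_expansion \<phi> a $$ 0 = a 0"
  using Lax_expansion_nth[of a 0] by simp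

lemma Lax_expansion_add: "Lax_expansion \<phi> a + Lax_expansion \<phi> b = Lax_expansion \<phi> (\<lambda>m. a m + b m)"
  unfolding Lax_expansion_def
  by (simp add: adic_sum_add[OF adic_summable_Lax_expansion adic_summable_Lax_expansion, symmetric]
      distrib_right fls_plus_const[symmetric])

lemma Lax_expansion_single:
  "Lax_expansion \<phi> (\<lambda>m. if m = k then c else 0) = fls_const c * Lax_neg_pow \<phi> k"
proof -
  have "(\<lambda>m. fls_const (if m = k then c else 0) * Lax_neg_pow \<phi> m)
      = (\<lambda>m. if m = k then fls_const c * Lax_neg_pow \<phi> k else 0)"
    by auto
  then show ?thesis by (simp add: Lax_expansion_def adic_sum_single)
qed

text \<open>Triangularity: the coefficient of \<open>X\<^sup>m\<close> determines \<open>a\<^sub>m\<close> from \<open>a\<^sub>0, \<dots>, a\<^sub>m\<^sub>-\<^sub>1\<close>.\<close>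

lemma Lax_expansion_inj: "Lax_expansion \<phi> a = Lax_expansion \<phi> b \<Longrightarrow> a m = b m"
proof (induction m rule: less_induct)
  case (less m)
  then have "(\<Sum>i<m. a i * Lax_neg_pow \<phi> i $$ int m) = (\<Sum>i<m. b i * Lax_neg_pow \<phi> i $$ int m)"
    by simp
  with arg_cong[OF less.prems, of "\<lambda>f. f $$ int m"] show ?case
    by (simp add: Lax_expansion_nth)
qed

fun Lax_coeff :: "lser \<Rightarrow> nat \<Rightarrow> smooth" where
  "Lax_coeff F m = F $$ int m - (\<Sum>i<m. Lax_coeff F i * Lax_neg_pow \<phi> i $$ int m)"

declare Lax_coeff.simps [simp del]

lemma Lax_expansion_Lax_coeff:
  assumes "vanishes_below F 0"
  shows "Lax_expansion \<phi> (Lax_coeff F) = F"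
proof (rule fls_eqI)
  fix n
  show "Lax_expansion \<phi> (Lax_coeff F) $$ n = F $$ n"
  proof (cases "n < 0")
    case True
    then show ?thesis
      using assms vanishes_below_Lax_expansion by (simp add: vanishes_below_def)
  next
    case False
    then obtain m where "n = int m" by (metis nonneg_int_cases not_less)
    then show ?thesis by (simp add: Lax_expansion_nth Lax_coeff.simps[of F m])
  qed
qed

lemma Lax_expansion_exists: "vanishes_below F 0 \<Longrightarrow> \<exists>a. F = Lax_expansion \<phi> a"
  using Lax_expansion_Lax_coeff by metis

lemma Du_Lax_neg_pow: "Du i (Lax_neg_pow \<phi> m) = - (of_nat m * Lax_neg_pow \<phi> (Suc m) * Du i (Lax \<phi>))"
  unfolding Lax_neg_pow_def by (rule derivation_of_inverse_power[OF Du_mult Lax_Lax_inv])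

lemma Dk_Lax_neg_pow: "Dk (Lax_neg_pow \<phi> m) = - (of_nat m * Lax_neg_pow \<phi> (Suc m) * Dk (Lax \<phi>))"
  unfolding Lax_neg_pow_def by (rule derivation_of_inverse_power[OF Dk_mult Lax_Lax_inv])

lemma adic_summable_dLax_terms:
  "adic_summable (\<lambda>m. fls_const (- (of_nat m * a m)) * Lax_neg_pow \<phi> (Suc m)) 0"
  unfolding adic_summable_def
proof
  fix m
  show "vanishes_below (fls_const (- (of_nat m * a m)) * Lax_neg_pow \<phi> (Suc m)) (0 + int m)"
    using vanishes_below_const_Lax_neg_pow[of _ "Suc m"] by (rule vanishes_below_mono) simp
qed

lemma Lax_expansion_dLax_coeffs:
  "Lax_expansion \<phi> (dLax_coeffs a)
     = adic_sum (\<lambda>m. fls_const (- (of_nat m * a m)) * Lax_neg_pow \<phi> (Suc m))"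
  unfolding Lax_expansion_def
  by (subst adic_sum_shift[OF adic_summable_Lax_expansion]) (simp add: dLax_coeffs_def)

lemma derivation_Lax_expansion:
  assumes D: "\<And>m. D (fls_const (a m) * Lax_neg_pow \<phi> m) = fls_const (b m) * Lax_neg_pow \<phi> m
                   + fls_const (- (of_nat m * a m)) * Lax_neg_pow \<phi> (Suc m) * DL"
    and D_sum: "D (Lax_expansion \<phi> a) = adic_sum (\<lambda>m. D (fls_const (a m) * Lax_neg_pow \<phi> m))"
    and DL: "vanishes_below DL e" "e \<le> 0"
  shows "D (Lax_expansion \<phi> a) = Lax_expansion \<phi> b + Lax_expansion \<phi> (dLax_coeffs a) * DL"
proof -
  have "D (Lax_expansion \<phi> a) = adic_sum (\<lambda>m. fls_const (b m) * Lax_neg_pow \<phi> m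
                    + fls_const (- (of_nat m * a m)) * Lax_neg_pow \<phi> (Suc m) * DL)"
    unfolding D_sum D ..
  also have "\<dots> = Lax_expansion \<phi> b
                  + adic_sum (\<lambda>m. fls_const (- (of_nat m * a m)) * Lax_neg_pow \<phi> (Suc m) * DL)"
  proof -
    have "adic_summable (\<lambda>m. fls_const (b m) * Lax_neg_pow \<phi> m) e"
      by (rule adic_summable_mono[OF adic_summable_Lax_expansion DL(2)])
    moreover have "adic_summable (\<lambda>m. fls_const (- (of_nat m * a m)) * Lax_neg_pow \<phi> (Suc m) * DL) e"
      using adic_summable_mult_right[OF DL(1) adic_summable_dLax_terms] by simp
    ultimately show ?thesis
      unfolding Lax_expansion_def by (rule adic_sum_add)
  qed
  also have "adic_sum (\<lambda>m. fls_const (- (of_nat m * a m)) * Lax_neg_pow \<phi> (Suc m) * DL)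
      = Lax_expansion \<phi> (dLax_coeffs a) * DL"
    unfolding Lax_expansion_dLax_coeffs
    by (rule adic_sum_mult_right[OF adic_summable_dLax_terms DL(1), symmetric])
  finally show ?thesis .
qed

lemma Du_Lax_expansion:
  "Du i (Lax_expansion \<phi> a)
     = Lax_expansion \<phi> (\<lambda>m. pd_smooth i (a m)) + Lax_expansion \<phi> (dLax_coeffs a) * Du i (Lax \<phi>)"
proof (rule derivation_Lax_expansion)
  show "Du i (Lax_expansion \<phi> a) = adic_sum (\<lambda>m. Du i (fls_const (a m) * Lax_neg_pow \<phi> m))"
    unfolding Lax_expansion_def by (rule Du_adic_sum[OF adic_summable_Lax_expansion])
  show "vanishes_below (Du i (Lax \<phi>)) (-1)"
    by (rule vanishes_below_Du[OF vanishes_below_Lax])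
qed (simp_all only: Du_mult Du_const Du_Lax_neg_pow fls_const_neg_of_nat_mult)

lemma Dk_Lax_expansion: "Dk (Lax_expansion \<phi> a) = Lax_expansion \<phi> (dLax_coeffs a) * Dk (Lax \<phi>)"
proof -
  have "Dk (Lax_expansion \<phi> a)
      = Lax_expansion \<phi> (\<lambda>m. 0) + Lax_expansion \<phi> (dLax_coeffs a) * Dk (Lax \<phi>)"
  proof (rule derivation_Lax_expansion)
    show "Dk (Lax_expansion \<phi> a) = adic_sum (\<lambda>m. Dk (fls_const (a m) * Lax_neg_pow \<phi> m))"
      unfolding Lax_expansion_def by (rule Dk_adic_sum[OF adic_summable_Lax_expansion])
    show "vanishes_below (Dk (Lax \<phi>)) 0"
      using vanishes_below_Dk[OF vanishes_below_Lax] by simp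
  qed (simp_all only: Dk_mult Dk_const Dk_Lax_neg_pow fls_const_neg_of_nat_mult fls_const_0
        mult_zero_left add_0_left order.refl)
  then show ?thesis by (simp add: Lax_expansion_def)
qed

lemma Pbr_Lax_expansion:
  "Pbr (Lax_expansion \<phi> a) (Lax_expansion \<phi> b)
     = Dk (Lax \<phi>) * (Lax_expansion \<phi> (dLax_coeffs a) * Lax_expansion \<phi> (\<lambda>m. pd_smooth vx (b m))
                      - Lax_expansion \<phi> (\<lambda>m. pd_smooth vx (a m)) * Lax_expansion \<phi> (dLax_coeffs b))"
  unfolding Pbr_def Du_Lax_expansion Dk_Lax_expansion by (simp add: algebra_simps)

lemma Pbr_Lax_expansion_Lax:
  "Pbr (Lax_expansion \<phi> a) (Lax \<phi>) = - (Dk (Lax \<phi>) * Lax_expansion \<phi> (\<lambda>m. pd_smooth vx (a m)))"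
  unfolding Pbr_def Du_Lax_expansion Dk_Lax_expansion by (simp add: algebra_simps)

lemma Pbr_Lax_Lax_expansion:
  "Pbr (Lax \<phi>) (Lax_expansion \<phi> b) = Dk (Lax \<phi>) * Lax_expansion \<phi> (\<lambda>m. pd_smooth vx (b m))"
  unfolding Pbr_def Du_Lax_expansion Dk_Lax_expansion by (simp add: algebra_simps)

lemma Du_Lax: "Du u (Lax \<phi>) = Pbr (Nabla u \<phi>) (Lax \<phi>)"
  using Du_Exp_ad[OF \<phi> vanishes_below_X_inv, of u] by (simp add: Lax_def Exp_ad_zero)

lemma Pbr_Lax_Exp_ad: "vanishes_below X c \<Longrightarrow> Pbr (Lax \<phi>) (Exp_ad \<phi> X) = Exp_ad \<phi> (Du vx X)"
  using Exp_ad_Pbr[OF \<phi> vanishes_below_X_inv] by (simp add: Lax_def Pbr_X_inv_left)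

text \<open>Let \<open>M = \<Sum>\<^sub>m a\<^sub>m L\<^sup>-\<^sup>m\<close> with \<open>{L, M} = 1\<close>, and \<open>\<nabla> = \<Sum>\<^sub>m c\<^sub>m L\<^sup>-\<^sup>m\<close>, \<open>E = \<Sum>\<^sub>m e\<^sub>m L\<^sup>-\<^sup>m\<close>.
  If \<open>\<partial>\<^sub>u L = {\<nabla>, L}\<close> and \<open>\<partial>\<^sub>u M = E + {\<nabla>, M}\<close>, then \<open>\<partial>\<^sub>u a = e + \<partial>\<^sub>L \<nabla>\<close> coefficientwise:
  after expanding both sides by the chain rule, the terms containing \<open>\<partial>\<^sub>x \<nabla>\<close> cancel and
  \<open>{L, M} = 1\<close> turns the remaining bracket into \<open>\<partial>\<^sub>L \<nabla>\<close>.\<close>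

lemma pd_coeffs_canonical_pair:
  assumes canonical: "Pbr (Lax \<phi>) (Lax_expansion \<phi> a) = 1"
    and Du_L: "Du u (Lax \<phi>) = Pbr (Lax_expansion \<phi> c) (Lax \<phi>)"
    and Du_M: "Du u (Lax_expansion \<phi> a)
                 = Lax_expansion \<phi> e + Pbr (Lax_expansion \<phi> c) (Lax_expansion \<phi> a)"
  shows "pd_smooth u (a m) = e m + dLax_coeffs c m"
proof -
  define l where "l = Dk (Lax \<phi>)"
  define ax cx where "ax = Lax_expansion \<phi> (\<lambda>m. pd_smooth vx (a m))"
    and "cx = Lax_expansion \<phi> (\<lambda>m. pd_smooth vx (c m))"
  define da dc where "da = Lax_expansion \<phi> (dLax_coeffs a)" and "dc = Lax_expansion \<phi> (dLax_coeffs c)"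
  have l_ax: "l * ax = 1"
    using canonical by (simp add: Pbr_Lax_Lax_expansion l_def ax_def)
  have "Lax_expansion \<phi> (\<lambda>m. pd_smooth u (a m)) - da * (l * cx)
      = Lax_expansion \<phi> e + l * (dc * ax - cx * da)"
    using Du_M unfolding Du_Lax_expansion Du_L Pbr_Lax_expansion_Lax Pbr_Lax_expansion
    by (simp add: l_def ax_def cx_def da_def dc_def)
  also have "l * (dc * ax - cx * da) = dc * (l * ax) - da * (l * cx)"
    by (simp add: algebra_simps)
  also have "\<dots> = dc - da * (l * cx)"
    using l_ax by simp
  finally have "Lax_expansion \<phi> (\<lambda>m. pd_smooth u (a m)) = Lax_expansion \<phi> e + dc"
    by (simp add: algebra_simps)
  then have "Lax_expansion \<phi> (\<lambda>m. pd_smooth u (a m)) = Lax_expansion \<phi> (\<lambda>m. e m + dLax_coeffs c m)"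
    by (simp add: dc_def Lax_expansion_add)
  then show ?thesis by (rule Lax_expansion_inj)
qed

theorem Nabla_Lax_expansion:
  assumes u: "u \<noteq> vx" and OS: "Exp_ad \<phi> (undressed_OS N) = Lax_expansion \<phi> a"
  shows "Nabla u \<phi> = Lax_expansion \<phi> (\<lambda>m. if m = 0 then pd_smooth u (\<phi> $$ 0)
                                          else - (sconst (1 / real m) * pd_smooth u (a (Suc m))))"
proof -
  obtain c where c: "Nabla u \<phi> = Lax_expansion \<phi> c"
    using Lax_expansion_exists[OF vanishes_below_Nabla[OF \<phi>]] by blast
  define r where "r = (if u = vs then N else 0)"
  have "vs \<noteq> vx" by (simp add: vs_def vx_def)
  then have Dx_OS: "Du vx (undressed_OS N) = 1" and Du_OS: "Du u (undressed_OS N) = rscale r fls_X"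
    unfolding undressed_OS_def r_def by (simp_all add: pd_smooth_scoord u sconst_mult[symmetric])
  have canonical: "Pbr (Lax \<phi>) (Lax_expansion \<phi> a) = 1"
    using Pbr_Lax_Exp_ad[OF vanishes_below_undressed_OS, of N] Exp_ad_one[OF \<phi>]
    by (simp add: OS Dx_OS)
  have "Du u (Lax_expansion \<phi> a)
      = Lax_expansion \<phi> (\<lambda>m. if m = 1 then sconst r else 0)
        + Pbr (Lax_expansion \<phi> c) (Lax_expansion \<phi> a)"
    using Du_Exp_ad[OF \<phi> vanishes_below_undressed_OS, of u N] Exp_ad_rscale[OF \<phi> vanishes_below_X, of r]
    by (simp add: OS c Du_OS Lax_expansion_single Lax_neg_pow_def Lax_inv_def)
  from pd_coeffs_canonical_pair[OF canonical Du_Lax[of u, unfolded c] this]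
  have coeffs: "pd_smooth u (a m) = (if m = 1 then sconst r else 0) + dLax_coeffs c m" for m .
  have "c m = (if m = 0 then pd_smooth u (\<phi> $$ 0)
              else - (sconst (1 / real m) * pd_smooth u (a (Suc m))))"
    for m
  proof (cases "m = 0")
    case True
    then show ?thesis using Nabla_nth_0[OF \<phi>, of u] Lax_expansion_nth_0 c by simp
  next
    case False
    have "sconst (1 / real m) * pd_smooth u (a (Suc m)) = - (sconst (1 / real m) * of_nat m * c m)"
      using coeffs[of "Suc m"] False by (simp add: dLax_coeffs_def mult.assoc)
    also have "sconst (1 / real m) * of_nat m = 1"
      using False by (simp add: of_nat_smooth sconst_mult[symmetric])
    finally show ?thesis using False by simp
  qed
  then show ?thesis using c by presburger
qed

end
section \<open>Transfer to the coefficient-function encoding\<close>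

definition deg_le :: "ser \<Rightarrow> int \<Rightarrow> bool" where
  "deg_le F d \<longleftrightarrow> (\<forall>a>d. F a = zc)"

lemma bdd_ser_iff_deg_le: "bdd_ser F \<longleftrightarrow> (\<exists>d. deg_le F d)"
  by (simp add: bdd_ser_def deg_le_def)

lemma zc_apply [simp]: "zc p = 0"
  by (simp add: zc_def)

lemma lmul_eq_sum:
  assumes "deg_le F dF" "deg_le G dG"
  shows "lmul F G j p = (\<Sum>a\<in>{j - dG..dF}. F a p * G (j - a) p)"
proof -
  have "{a. F a \<noteq> zc \<and> G (j - a) \<noteq> zc} \<subseteq> {j - dG..dF}"
    using assms by (auto simp: deg_le_def not_less[symmetric])
  then show ?thesis
    unfolding lmul_def by (intro sum.mono_neutral_left) auto
qed

lemma deg_le_lmul: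
  assumes "deg_le F dF" "deg_le G dG"
  shows "deg_le (lmul F G) (dF + dG)"
  unfolding deg_le_def
proof (intro allI impI ext)
  fix a p assume "a > dF + dG"
  then show "lmul F G a p = zc p"
    unfolding lmul_eq_sum[OF assms] by simp
qed

text \<open>Evaluating the coefficients at a point \<open>p\<close> gives a Laurent series over the field \<open>\<real>\<close>,
  where inverses are unique.  This identifies \<open>linv\<close>, whose defining property also admits
  non-smooth coefficient functions.\<close>

definition eval_ser :: "(nat \<Rightarrow> real) \<Rightarrow> ser \<Rightarrow> real fls" where
  "eval_ser p F = Abs_fls (\<lambda>n. F (- n) p)"

lemma eval_ser_nth: "deg_le F d \<Longrightarrow> eval_ser p F $$ n = F (- n) p"
  unfolding eval_ser_def by (rule nth_Abs_fls_lower_bound[of "- d"]) (auto simp: deg_le_def)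

lemma vanishes_below_eval_ser: "deg_le F d \<Longrightarrow> vanishes_below (eval_ser p F) (- d)"
  by (auto simp: vanishes_below_def eval_ser_nth deg_le_def)

lemma eval_ser_lmul:
  assumes F: "deg_le F dF" and G: "deg_le G dG"
  shows "eval_ser p (lmul F G) = eval_ser p F * eval_ser p G"
proof (rule fls_eqI)
  fix n
  have "(eval_ser p F * eval_ser p G) $$ n
      = (\<Sum>i\<in>{- dF..n + dG}. eval_ser p F $$ i * eval_ser p G $$ (n - i))"
    by (rule fls_times_nth_superset[OF vanishes_below_eval_ser[OF F] vanishes_below_eval_ser[OF G]])
      auto
  also have "\<dots> = (\<Sum>i\<in>{- dF..n + dG}. F (- i) p * G (i - n) p)"
    by (simp add: eval_ser_nth[OF F] eval_ser_nth[OF G])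
  also have "\<dots> = (\<Sum>a\<in>{- n - dG..dF}. F a p * G (- n - a) p)"
    by (rule sum.reindex_bij_witness[of _ uminus uminus]) auto
  also have "\<dots> = eval_ser p (lmul F G) $$ n"
    by (simp add: lmul_eq_sum[OF F G] eval_ser_nth[OF deg_le_lmul[OF F G]])
  finally show "eval_ser p (lmul F G) $$ n = (eval_ser p F * eval_ser p G) $$ n" by simp
qed

lemma eval_ser_lone: "eval_ser p lone = 1"
proof (rule fls_eqI)
  fix n
  have "deg_le lone 0" by (simp add: deg_le_def lone_def lcst_def)
  then show "eval_ser p lone $$ n = 1 $$ n"
    by (simp add: eval_ser_nth lone_def lcst_def)
qed

lemma eval_ser_inj:
  assumes "deg_le F d" "deg_le G e" "\<And>p. eval_ser p F = eval_ser p G"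
  shows "F = G"
proof (intro ext)
  fix j p
  have "eval_ser p F $$ (- j) = eval_ser p G $$ (- j)" using assms(3) by simp
  then show "F j p = G j p" by (simp add: eval_ser_nth[OF assms(1)] eval_ser_nth[OF assms(2)])
qed

definition ser_of :: "lser \<Rightarrow> ser" where
  "ser_of f = (\<lambda>j. Rep_smooth (f $$ (- j)))"

lemma deg_le_ser_of: "vanishes_below f c \<Longrightarrow> deg_le (ser_of f) (- c)"
  by (auto simp: deg_le_def ser_of_def vanishes_below_def Rep_smooth_0)

lemma deg_le_ser_of_subdegree: "deg_le (ser_of f) (- fls_subdegree f)"
  by (rule deg_le_ser_of[OF vanishes_below_subdegree])

lemma bdd_ser_ser_of: "bdd_ser (ser_of f)"
  using deg_le_ser_of_subdegree bdd_ser_iff_deg_le by blast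

lemma ser_of_eq_zc_iff: "ser_of f j = zc \<longleftrightarrow> f $$ (- j) = 0"
  by (simp add: ser_of_def Rep_smooth_eq_zc_iff)

lemma ladd_ser_of: "ladd (ser_of f) (ser_of g) = ser_of (f + g)"
  by (simp add: ladd_def ser_of_def Rep_smooth_add)

lemma lsub_ser_of: "lsub (ser_of f) (ser_of g) = ser_of (f - g)"
  by (simp add: lsub_def ser_of_def Rep_smooth_diff)

lemma lscal_ser_of: "lscal (Rep_smooth c) (ser_of f) = ser_of (fls_const c * f)"
  by (simp add: lscal_def ser_of_def Rep_smooth_mult)

lemma lscal_const_ser_of: "lscal (\<lambda>p. r) (ser_of f) = ser_of (rscale r f)"
  using lscal_ser_of[of "sconst r" f] by (simp add: Rep_smooth_sconst)

lemma lcst_ser_of: "lcst (Rep_smooth c) = ser_of (fls_const c)"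
  by (auto simp: lcst_def ser_of_def Rep_smooth_0 fun_eq_iff)

lemma lone_ser_of: "lone = ser_of 1"
  using lcst_ser_of[of 1] by (simp add: lone_def Rep_smooth_1)

lemma lscal_lone: "lscal c lone = lcst c"
  by (auto simp: lscal_def lone_def lcst_def fun_eq_iff)

lemma kser_ser_of: "kser = ser_of fls_X_inv"
  by (auto simp: kser_def ser_of_def Rep_smooth_0 Rep_smooth_1 fun_eq_iff)

lemma kshift_ser_of: "kshift (-1) (ser_of f) = ser_of (fls_X * f)"
  by (simp add: kshift_def ser_of_def fls_X_times_conv_shift algebra_simps)

lemma du_ser_of: "du i (ser_of f) = ser_of (Du i f)"
  by (simp add: du_def ser_of_def Rep_smooth_pd_smooth)

lemma dk_ser_of: "dk (ser_of f) = ser_of (Dk f)"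
proof (intro ext)
  fix j p
  have h: "Rep_smooth (Dk f $$ (- j)) p = - (real_of_int (- j - 1) * Rep_smooth (f $$ (- j - 1)) p)"
    unfolding Dk_nth by (simp add: Rep_smooth_uminus Rep_smooth_mult of_int_smooth Rep_smooth_sconst)
  have i: "- (j + 1) = - j - 1" by simp
  show "dk (ser_of f) j p = ser_of (Dk f) j p"
    unfolding dk_def ser_of_def h i by (simp add: algebra_simps)
qed

lemma lmul_ser_of: "lmul (ser_of f) (ser_of g) = ser_of (f * g)"
proof (intro ext)
  fix j p
  define a b where "a = fls_subdegree f" and "b = fls_subdegree g"
  have "lmul (ser_of f) (ser_of g) j p = (\<Sum>x\<in>{j + b..- a}. ser_of f x p * ser_of g (j - x) p)"
    using lmul_eq_sum[OF deg_le_ser_of_subdegree deg_le_ser_of_subdegree, of f g j p]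
    by (simp add: a_def b_def)
  also have "\<dots> = (\<Sum>i\<in>{a..- j - b}. Rep_smooth (f $$ i) p * Rep_smooth (g $$ (- j - i)) p)"
    by (rule sum.reindex_bij_witness[of _ uminus uminus]) (auto simp: ser_of_def)
  also have "\<dots> = Rep_smooth ((f * g) $$ (- j)) p"
    by (simp add: fls_times_nth_superset[OF vanishes_below_subdegree vanishes_below_subdegree,
          of "{a..- j - b}"] a_def b_def Rep_smooth_sum Rep_smooth_mult)
  finally show "lmul (ser_of f) (ser_of g) j p = ser_of (f * g) j p" by (simp add: ser_of_def)
qed

lemma pbr_ser_of: "pbr (ser_of f) (ser_of g) = ser_of (Pbr f g)"
  by (simp add: pbr_def Pbr_def dk_ser_of du_ser_of lmul_ser_of lsub_ser_of)

lemma lpow_ser_of: "lpow (ser_of f) n = ser_of (f ^ n)"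
  by (induction n) (simp_all add: lone_ser_of lmul_ser_of)

lemma pbr_pow_ser_of: "(pbr (ser_of f) ^^ m) (ser_of g) = ser_of ((Pbr f ^^ m) g)"
  by (induction m) (simp_all add: pbr_ser_of)

lemma fsum_ser_of:
  assumes "adic_summable S c"
  shows "fsum (\<lambda>m. ser_of (S m)) = ser_of (adic_sum S)"
proof (intro ext)
  fix j p
  define M where "M = {..nat (- j - c)}"
  have "{m. ser_of (S m) j \<noteq> zc} \<subseteq> M"
  proof
    fix m assume "m \<in> {m. ser_of (S m) j \<noteq> zc}"
    then have "\<not> (- j < c + int m)"
      using adic_summableD[OF assms] by (auto simp: ser_of_eq_zc_iff)
    then show "m \<in> M" unfolding M_def using le_natI by simp
  qed
  then have "fsum (\<lambda>m. ser_of (S m)) j p = (\<Sum>m\<in>M. ser_of (S m) j p)"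
    unfolding fsum_def by (intro sum.mono_neutral_left) (auto simp: M_def)
  also have "\<dots> = ser_of (adic_sum S) j p"
    using adic_sum_nth_set[OF assms, of M "- j"]
    by (simp add: ser_of_def Rep_smooth_sum M_def le_natI subset_eq)
  finally show "fsum (\<lambda>m. ser_of (S m)) j p = ser_of (adic_sum S) j p" .
qed

lemma exp_ad_ser_of:
  assumes "vanishes_below \<phi> 0" "vanishes_below X c"
  shows "exp_ad (ser_of \<phi>) (ser_of X) = ser_of (Exp_ad \<phi> X)"
  unfolding exp_ad_def Exp_ad_def pbr_pow_ser_of lscal_const_ser_of
  by (rule fsum_ser_of[OF adic_summable_rscale_Pbr_pow[OF assms]])

lemma nabla_ser_of:
  assumes "vanishes_below \<phi> 0"
  shows "nabla i (ser_of \<phi>) (ser_of \<phi>) = ser_of (Nabla i \<phi>)"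
  unfolding nabla_def Nabla_def du_ser_of pbr_pow_ser_of lscal_const_ser_of
  by (rule fsum_ser_of[OF adic_summable_rscale_Pbr_pow[OF assms vanishes_below_Du[OF assms]]])

lemma linv_ser_of:
  assumes \<phi>: "vanishes_below \<phi> 0"
  shows "linv (ser_of (Lax \<phi>)) = ser_of (Lax_inv \<phi>)"
  unfolding linv_def
proof (rule the_equality)
  have L: "deg_le (ser_of (Lax \<phi>)) (- fls_subdegree (Lax \<phi>))"
    and L_inv: "deg_le (ser_of (Lax_inv \<phi>)) (- fls_subdegree (Lax_inv \<phi>))"
    by (rule deg_le_ser_of_subdegree)+
  have L_L_inv: "lmul (ser_of (Lax \<phi>)) (ser_of (Lax_inv \<phi>)) = lone"
    and L_inv_L: "lmul (ser_of (Lax_inv \<phi>)) (ser_of (Lax \<phi>)) = lone"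
    using Lax_Lax_inv[OF \<phi>] by (simp_all add: lmul_ser_of lone_ser_of mult.commute)
  then show "bdd_ser (ser_of (Lax_inv \<phi>)) \<and> lmul (ser_of (Lax_inv \<phi>)) (ser_of (Lax \<phi>)) = lone"
    by (simp add: bdd_ser_ser_of)
  fix G assume G: "bdd_ser G \<and> lmul G (ser_of (Lax \<phi>)) = lone"
  then obtain d where d: "deg_le G d" using bdd_ser_iff_deg_le by blast
  show "G = ser_of (Lax_inv \<phi>)"
  proof (rule eval_ser_inj[OF d L_inv])
    fix p
    let ?G = "eval_ser p G" and ?L = "eval_ser p (ser_of (Lax \<phi>))"
      and ?L_inv = "eval_ser p (ser_of (Lax_inv \<phi>))"
    have G_L: "?G * ?L = 1" and L_L_inv': "?L * ?L_inv = 1"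
      using G L_L_inv eval_ser_lmul[OF d L, of p] eval_ser_lmul[OF L L_inv, of p]
      by (simp_all add: eval_ser_lone)
    have "?G = ?G * (?L * ?L_inv)" using L_L_inv' by simp
    also have "\<dots> = (?G * ?L) * ?L_inv" by (simp only: mult.assoc)
    also have "\<dots> = ?L_inv" using G_L by simp
    finally show "?G = ?L_inv" .
  qed
qed

definition finite_coeffwise :: "(nat \<Rightarrow> ser) \<Rightarrow> bool" where
  "finite_coeffwise S \<longleftrightarrow> (\<forall>j. \<exists>K. \<forall>m>K. S m j = zc)"

lemma fsum_upto:
  assumes "\<forall>m>K. S m j = zc"
  shows "fsum S j p = (\<Sum>m\<le>K. S m j p)"
  unfolding fsum_def
  by (rule sum.mono_neutral_left) (use assms in \<open>auto simp: not_le[symmetric]\<close>)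

lemma fsum_shift:
  assumes "finite_coeffwise S"
  shows "fsum S = ladd (S 0) (fsum (\<lambda>m. S (Suc m)))"
proof (intro ext)
  fix j p
  obtain K where K: "\<forall>m>K. S m j = zc" using assms by (auto simp: finite_coeffwise_def)
  have "fsum S j p = (\<Sum>m\<le>Suc K. S m j p)" by (rule fsum_upto) (use K in auto)
  also have "\<dots> = S 0 j p + (\<Sum>m\<le>K. S (Suc m) j p)" by (simp only: sum.atMost_Suc_shift)
  also have "(\<Sum>m\<le>K. S (Suc m) j p) = fsum (\<lambda>m. S (Suc m)) j p"
    using fsum_upto[of K "\<lambda>m. S (Suc m)" j p] K by simp
  finally show "fsum S j p = ladd (S 0) (fsum (\<lambda>m. S (Suc m))) j p" by (simp add: ladd_def)
qed

lemma fsum_lneg: "fsum (\<lambda>m. lneg (S m)) = lneg (fsum S)"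
proof (intro ext)
  fix j p
  have "lneg (S m) j = zc \<longleftrightarrow> S m j = zc" for m
    by (auto simp: lneg_def zc_def fun_eq_iff)
  then have "{m. lneg (S m) j \<noteq> zc} = {m. S m j \<noteq> zc}" by auto
  then show "fsum (\<lambda>m. lneg (S m)) j p = lneg (fsum S) j p"
    unfolding fsum_def lneg_def by (simp add: sum_negf)
qed

lemma finite_coeffwise_if_0:
  "finite_coeffwise S \<Longrightarrow> finite_coeffwise (\<lambda>n. if n = 0 then zser else S n)"
  unfolding finite_coeffwise_def zser_def by (metis (full_types))

lemma finite_coeffwise_Lax_neg_pow:
  assumes "vanishes_below \<phi> 0"
  shows "finite_coeffwise (\<lambda>m. lscal (a m) (ser_of (Lax_neg_pow \<phi> (m + k))))"
  unfolding finite_coeffwise_def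
proof
  fix j
  show "\<exists>K. \<forall>m>K. lscal (a m) (ser_of (Lax_neg_pow \<phi> (m + k))) j = zc"
  proof (intro exI allI impI)
    fix m assume "m > nat (- j)"
    then have "Lax_neg_pow \<phi> (m + k) $$ (- j) = 0"
      using vanishes_belowD[OF vanishes_below_Lax_neg_pow[OF assms, of "m + k"]] by simp
    then show "lscal (a m) (ser_of (Lax_neg_pow \<phi> (m + k))) j = zc"
      by (simp add: lscal_def ser_of_def Rep_smooth_0 zc_def)
  qed
qed

text \<open>The expansion \<open>\<Sum>\<^sub>m a\<^sub>m L\<^sup>-\<^sup>m\<close> with arbitrary, possibly non-smooth, coefficient functions;
  the Orlov--Schulman coefficients \<open>v\<^sub>n\<close> are of this kind.\<close>

definition ser_Lax_expansion :: "lser \<Rightarrow> (nat \<Rightarrow> coef) \<Rightarrow> ser" where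
  "ser_Lax_expansion \<phi> a = fsum (\<lambda>m. lscal (a m) (ser_of (Lax_neg_pow \<phi> m)))"

lemma ser_Lax_expansion_nth:
  assumes \<phi>: "vanishes_below \<phi> 0"
  shows "ser_Lax_expansion \<phi> a (- int k) p
           = a k p + (\<Sum>m<k. a m p * Rep_smooth (Lax_neg_pow \<phi> m $$ int k) p)"
proof -
  have "\<forall>m>k. lscal (a m) (ser_of (Lax_neg_pow \<phi> m)) (- int k) = zc"
    using vanishes_belowD[OF vanishes_below_Lax_neg_pow[OF \<phi>]]
    by (simp add: lscal_def ser_of_def Rep_smooth_0 zc_def)
  then show ?thesis
    by (simp add: ser_Lax_expansion_def fsum_upto lscal_def ser_of_def lessThan_Suc_atMost[symmetric]
        Lax_neg_pow_nth_lowest[OF \<phi>] Rep_smooth_1)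
qed

lemma ser_Lax_expansion_inj:
  assumes \<phi>: "vanishes_below \<phi> 0" and eq: "ser_Lax_expansion \<phi> a = ser_Lax_expansion \<phi> b"
  shows "a m = b m"
proof
  fix p
  show "a m p = b m p"
  proof (induction m rule: less_induct)
    case (less m)
    then have "(\<Sum>i<m. a i p * Rep_smooth (Lax_neg_pow \<phi> i $$ int m) p)
        = (\<Sum>i<m. b i p * Rep_smooth (Lax_neg_pow \<phi> i $$ int m) p)"
      by simp
    moreover have "ser_Lax_expansion \<phi> a (- int m) p = ser_Lax_expansion \<phi> b (- int m) p"
      using eq by simp
    ultimately show ?case
      by (simp add: ser_Lax_expansion_nth[OF \<phi>])
  qed
qed

lemma ser_of_Lax_expansion:
  assumes "vanishes_below \<phi> 0"
  shows "ser_of (Lax_expansion \<phi> a) = ser_Lax_expansion \<phi> (\<lambda>m. Rep_smooth (a m))"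
  unfolding ser_Lax_expansion_def Lax_expansion_def lscal_ser_of
  by (rule fsum_ser_of[OF adic_summable_Lax_expansion[OF assms], symmetric])

lemma lnpow_ser_of_Lax: "vanishes_below \<phi> 0 \<Longrightarrow> lnpow (ser_of (Lax \<phi>)) m = ser_of (Lax_neg_pow \<phi> m)"
  by (simp add: lnpow_def linv_ser_of lpow_ser_of Lax_neg_pow_def)

definition fls_of_ser :: "ser \<Rightarrow> lser" where
  "fls_of_ser F = Abs_fls (\<lambda>n. Abs_smooth (F (- n)))"

lemma ser_of_fls_of_ser:
  assumes "\<forall>j. smooth_fn (F j)" and "\<forall>j>0. F j = zc"
  shows "ser_of (fls_of_ser F) = F" and "vanishes_below (fls_of_ser F) 0"
proof -
  have nth: "fls_of_ser F $$ n = Abs_smooth (F (- n))" for n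
    unfolding fls_of_ser_def by (rule nth_Abs_fls_lower_bound[of 0]) (simp add: assms(2) Abs_smooth_zc)
  show "ser_of (fls_of_ser F) = F"
    by (simp add: ser_of_def nth Abs_smooth_inverse' assms(1))
  show "vanishes_below (fls_of_ser F) 0"
    by (simp add: vanishes_below_def nth assms(2) Abs_smooth_zc)
qed

lemma ser_of_undressed_OS:
  "ser_of (undressed_OS (real N)) = ladd (lcst (\<lambda>p. p vx)) (lscal (\<lambda>p. real N * p vs) (kshift (-1) lone))"
proof -
  have "(\<lambda>p. p vx) = Rep_smooth (scoord vx)"
    and "(\<lambda>p. real N * p vs) = Rep_smooth (sconst (real N) * scoord vs)"
    by (simp_all add: Rep_smooth_scoord Rep_smooth_mult Rep_smooth_sconst)
  then show ?thesis
    by (simp add: undressed_OS_def lone_ser_of kshift_ser_of lscal_ser_of lcst_ser_of ladd_ser_of)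
qed

lemma ser_Lax_expansion_orlov_schulman:
  assumes \<phi>: "vanishes_below \<phi> 0" and L: "L = ser_of (Lax \<phi>)"
  shows "ladd (ladd (lcst (\<lambda>p. p vx)) (lscal (\<lambda>p. real N * p vs) (linv L)))
           (fsum (\<lambda>n. if n = 0 then zser else lscal (v n) (lnpow L (n + 1))))
         = ser_Lax_expansion \<phi>
             (\<lambda>m. if m = 0 then (\<lambda>p. p vx) else if m = 1 then (\<lambda>p. real N * p vs) else v (m - 1))"
    (is "_ = ser_Lax_expansion \<phi> ?b")
proof -
  have fin: "finite_coeffwise (\<lambda>m. lscal (f m) (ser_of (Lax_neg_pow \<phi> (m + k))))" for f k
    by (rule finite_coeffwise_Lax_neg_pow[OF \<phi>])
  have "ser_Lax_expansion \<phi> ?b = ladd (lscal (?b 0) (ser_of (Lax_neg_pow \<phi> 0)))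
      (ladd (lscal (?b 1) (ser_of (Lax_neg_pow \<phi> 1)))
        (fsum (\<lambda>m. lscal (?b (Suc (Suc m))) (ser_of (Lax_neg_pow \<phi> (Suc (Suc m)))))))"
    unfolding ser_Lax_expansion_def fsum_shift[OF fin[of _ 0, simplified]]
      fsum_shift[OF fin[of _ 1, simplified]]
    by simp
  moreover have "fsum (\<lambda>n. if n = 0 then zser else lscal (v n) (lnpow L (n + 1)))
      = ladd zser (fsum (\<lambda>m. lscal (v (Suc m)) (ser_of (Lax_neg_pow \<phi> (Suc (Suc m))))))"
    unfolding L lnpow_ser_of_Lax[OF \<phi>]
    using fsum_shift[OF finite_coeffwise_if_0[OF fin[of v 1]]] by simp
  ultimately show ?thesis
    by (simp add: Lax_neg_pow_def L linv_ser_of[OF \<phi>] lone_ser_of[symmetric] lscal_lone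
        ladd_def zser_def fun_eq_iff add.assoc)
qed

text \<open>The Orlov--Schulman coefficients \<open>v\<^sub>n\<close>, a priori arbitrary functions, are the smooth
  coefficients of the dressed series \<open>e\<^sup>a\<^sup>d\<^sup>\<phi> (x + N s k\<^sup>-\<^sup>1)\<close>.\<close>

lemma orlov_schulman_Lax_expansion:
  assumes \<phi>: "vanishes_below \<phi> 0" and L: "L = ser_of (Lax \<phi>)"
    and OS: "exp_ad (ser_of \<phi>) (ladd (lcst (\<lambda>p. p vx)) (lscal (\<lambda>p. real N * p vs) (kshift (-1) lone)))
           = ladd (ladd (lcst (\<lambda>p. p vx)) (lscal (\<lambda>p. real N * p vs) (linv L)))
                  (fsum (\<lambda>n. if n = 0 then zser else lscal (v n) (lnpow L (n + 1))))"
  obtains a where "Exp_ad \<phi> (undressed_OS (real N)) = Lax_expansion \<phi> a"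
    and "\<And>m. m \<ge> 1 \<Longrightarrow> v m = Rep_smooth (a (Suc m))"
proof -
  define a where "a = Lax_coeff \<phi> (Exp_ad \<phi> (undressed_OS (real N)))"
  have M: "Exp_ad \<phi> (undressed_OS (real N)) = Lax_expansion \<phi> a"
    unfolding a_def
    by (rule Lax_expansion_Lax_coeff[OF \<phi> vanishes_below_Exp_ad[OF \<phi> vanishes_below_undressed_OS],
          symmetric])
  have "ser_Lax_expansion \<phi> (\<lambda>m. Rep_smooth (a m)) = ser_of (Exp_ad \<phi> (undressed_OS (real N)))"
    by (simp add: M ser_of_Lax_expansion[OF \<phi>])
  also have "\<dots> = ser_Lax_expansion \<phi>
      (\<lambda>m. if m = 0 then (\<lambda>p. p vx) else if m = 1 then (\<lambda>p. real N * p vs) else v (m - 1))"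
    unfolding exp_ad_ser_of[OF \<phi> vanishes_below_undressed_OS, symmetric] ser_of_undressed_OS OS
    by (rule ser_Lax_expansion_orlov_schulman[OF \<phi> L])
  finally have a: "Rep_smooth (a m)
      = (if m = 0 then (\<lambda>p. p vx) else if m = 1 then (\<lambda>p. real N * p vs) else v (m - 1))" for m
    by (rule ser_Lax_expansion_inj[OF \<phi>])
  have "v m = Rep_smooth (a (Suc m))" if "m \<ge> 1" for m
    using a[of "Suc m"] that by simp
  with M show ?thesis by (rule that)
qed

lemma nabla_ser_Lax_expansion:
  assumes \<phi>: "vanishes_below \<phi> 0"
    and lnpow: "\<And>m. lnpow L m = ser_of (Lax_neg_pow \<phi> m)"
    and OS: "Exp_ad \<phi> (undressed_OS N) = Lax_expansion \<phi> a"
    and v: "\<And>m. m \<ge> 1 \<Longrightarrow> v m = Rep_smooth (a (Suc m))"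
    and u: "u \<noteq> vx"
  shows "nabla u (ser_of \<phi>) (ser_of \<phi>)
           = ladd (lcst (pd u (Rep_smooth (\<phi> $$ 0))))
               (lneg (fsum (\<lambda>m. if m = 0 then zser else lscal (\<lambda>p. pd u (v m) p / real m) (lnpow L m))))"
proof -
  define c where "c m = (if m = 0 then pd_smooth u (\<phi> $$ 0)
                         else - (sconst (1 / real m) * pd_smooth u (a (Suc m))))" for m
  have fin: "finite_coeffwise (\<lambda>m. lscal (f m) (ser_of (Lax_neg_pow \<phi> m)))" for f
    using finite_coeffwise_Lax_neg_pow[OF \<phi>, of f 0] by simp
  have "nabla u (ser_of \<phi>) (ser_of \<phi>) = ser_Lax_expansion \<phi> (\<lambda>m. Rep_smooth (c m))"
    using Nabla_Lax_expansion[OF \<phi> u OS]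
    by (simp add: nabla_ser_of[OF \<phi>] ser_of_Lax_expansion[OF \<phi>] c_def)
  also have "\<dots> = ladd (lscal (Rep_smooth (c 0)) (ser_of (Lax_neg_pow \<phi> 0)))
      (fsum (\<lambda>m. lscal (Rep_smooth (c (Suc m))) (ser_of (Lax_neg_pow \<phi> (Suc m)))))"
    unfolding ser_Lax_expansion_def by (rule fsum_shift[OF fin])
  also have "lscal (Rep_smooth (c 0)) (ser_of (Lax_neg_pow \<phi> 0)) = lcst (pd u (Rep_smooth (\<phi> $$ 0)))"
    by (simp add: Lax_neg_pow_def lone_ser_of[symmetric] lscal_lone c_def Rep_smooth_pd_smooth)
  also have "fsum (\<lambda>m. lscal (Rep_smooth (c (Suc m))) (ser_of (Lax_neg_pow \<phi> (Suc m))))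
      = lneg (fsum (\<lambda>m. lscal (\<lambda>p. pd u (v (Suc m)) p / real (Suc m)) (lnpow L (Suc m))))"
    unfolding fsum_lneg[symmetric]
    by (rule arg_cong[where f = fsum])
      (simp add: fun_eq_iff lnpow c_def v lscal_def lneg_def Rep_smooth_uminus Rep_smooth_mult
        Rep_smooth_sconst Rep_smooth_pd_smooth)
  also have "fsum (\<lambda>m. lscal (\<lambda>p. pd u (v (Suc m)) p / real (Suc m)) (lnpow L (Suc m)))
      = fsum (\<lambda>m. if m = 0 then zser else lscal (\<lambda>p. pd u (v m) p / real m) (lnpow L m))"
    using fsum_shift[OF finite_coeffwise_if_0[OF fin[unfolded lnpow[symmetric]]]]
    by (simp add: ladd_def zser_def)
  finally show ?thesis .
qed

theorem nabla_dressing_expansion: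
  assumes \<phi>_supp: "\<forall>j>0. \<phi> j = zc" and \<phi>_smooth: "\<forall>j. smooth_fn (\<phi> j)"
    and dress_L: "L = exp_ad \<phi> kser"
    and OS: "exp_ad \<phi> (ladd (lcst (\<lambda>p. p vx)) (lscal (\<lambda>p. real N * p vs) (kshift (-1) lone)))
           = ladd (ladd (lcst (\<lambda>p. p vx)) (lscal (\<lambda>p. real N * p vs) (linv L)))
                  (fsum (\<lambda>n. if n = 0 then zser else lscal (v n) (lnpow L (n + 1))))"
    and u: "u \<noteq> vx"
  shows "nabla u \<phi> \<phi>
           = ladd (lcst (pd u (\<phi> 0)))
               (lneg (fsum (\<lambda>m. if m = 0 then zser else lscal (\<lambda>p. pd u (v m) p / real m) (lnpow L m))))"
proof -
  define \<psi> where "\<psi> = fls_of_ser \<phi>"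
  have \<psi>: "vanishes_below \<psi> 0" and \<phi>: "\<phi> = ser_of \<psi>"
    using ser_of_fls_of_ser[OF \<phi>_smooth \<phi>_supp] by (simp_all add: \<psi>_def)
  have L: "L = ser_of (Lax \<psi>)"
    unfolding dress_L \<phi> kser_ser_of Lax_def by (rule exp_ad_ser_of[OF \<psi> vanishes_below_X_inv])
  obtain a where "Exp_ad \<psi> (undressed_OS (real N)) = Lax_expansion \<psi> a"
    and "\<And>m. m \<ge> 1 \<Longrightarrow> v m = Rep_smooth (a (Suc m))"
    using orlov_schulman_Lax_expansion[OF \<psi> L OS[unfolded \<phi>]] by blast
  from nabla_ser_Lax_expansion[OF \<psi> lnpow_ser_of_Lax[OF \<psi>, folded L] this u]
  show ?thesis by (simp add: \<phi> ser_of_def)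
qed

theorem mainTheorem7:
  fixes N :: nat and L P \<phi> :: ser and v :: "nat \<Rightarrow> coef"
  assumes N_pos: "N \<ge> 1"
    and L_top: "L 1 = (\<lambda>p. 1)" and L_bdd: "\<forall>j>1. L j = zc"
    and P_supp: "\<forall>j. (j > int N \<or> j \<le> 0) \<longrightarrow> P j = zc"
    and P_lead: "\<forall>p. P (int N) p \<noteq> 0"
    and L_smooth: "\<forall>j. smooth_fn (L j)" and P_smooth: "\<forall>j. smooth_fn (P j)"
    and L_xt: "\<forall>j. dep_xt (L j)" and P_xt: "\<forall>j. dep_xt (P j)"
    and hier_t: "\<forall>n\<ge>1. du (vt n) L = pbr (Bn L n) L"
    and hier_s: "du vs L = pbr_logP N P L"
    and hier_tlogP: "\<forall>n\<ge>1. du (vt n) (logP_reg N P)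
                        = lsub (du vs (Bn L n)) (pbr_logP N P (Bn L n))"
    and phi_supp: "\<forall>j>0. \<phi> j = zc"
    and phi_smooth: "\<forall>j. smooth_fn (\<phi> j)" and phi_xt: "\<forall>j. dep_xt (\<phi> j)"
    and dress_L: "L = exp_ad \<phi> kser"
    and dress_t: "\<forall>n\<ge>1. nabla (vt n) \<phi> \<phi> = Bcn L n"
    and dress_s: "nabla vs \<phi> \<phi> = lsub (logP_reg N P) (NlogL_reg N L)"
    and OS: "exp_ad \<phi> (ladd (lcst (\<lambda>p. p vx)) (lscal (\<lambda>p. real N * p vs) (kshift (-1) lone)))
           = ladd (ladd (lcst (\<lambda>p. p vx)) (lscal (\<lambda>p. real N * p vs) (linv L)))
                  (fsum (\<lambda>n. if n = 0 then zser else lscal (v n) (lnpow L (n + 1))))"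
  shows "(\<forall>n\<ge>1. Bn L n
            = lsub (ladd (lpow L n) (lcst (pd (vt n) (\<phi> 0))))
                   (fsum (\<lambda>m. if m = 0 then zser
                              else lscal (\<lambda>p. pd (vt n) (v m) p / real m) (lnpow L m))))
       \<and> logP_reg N P
            = lsub (ladd (NlogL_reg N L) (lcst (pd vs (\<phi> 0))))
                   (fsum (\<lambda>m. if m = 0 then zser
                              else lscal (\<lambda>p. pd vs (v m) p / real m) (lnpow L m)))"
proof -
  have nabla: "nabla u \<phi> \<phi> = ladd (lcst (pd u (\<phi> 0)))
      (lneg (fsum (\<lambda>m. if m = 0 then zser else lscal (\<lambda>p. pd u (v m) p / real m) (lnpow L m))))"
    if "u \<noteq> vx" for u
    by (rule nabla_dressing_expansion[OF phi_supp phi_smooth dress_L OS that])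
  show ?thesis
  proof (intro conjI allI impI)
    fix n :: nat
    assume "n \<ge> 1"
    then have "vt n \<noteq> vx" and "Bcn L n = nabla (vt n) \<phi> \<phi>"
      using dress_t by (simp_all add: vt_def vx_def)
    moreover have "Bn L n = ladd (lpow L n) (Bcn L n)"
      by (simp add: Bn_def Bcn_def ppos_def pnonpos_def ladd_def lneg_def zc_def fun_eq_iff)
    ultimately show "Bn L n = lsub (ladd (lpow L n) (lcst (pd (vt n) (\<phi> 0))))
        (fsum (\<lambda>m. if m = 0 then zser else lscal (\<lambda>p. pd (vt n) (v m) p / real m) (lnpow L m)))"
      by (simp add: nabla ladd_def lsub_def lneg_def fun_eq_iff)
  next
    have "vs \<noteq> vx" by (simp add: vs_def vx_def)
    moreover have "logP_reg N P = ladd (NlogL_reg N L) (nabla vs \<phi> \<phi>)"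
      using dress_s by (simp add: lsub_def ladd_def fun_eq_iff)
    ultimately show "logP_reg N P = lsub (ladd (NlogL_reg N L) (lcst (pd vs (\<phi> 0))))
        (fsum (\<lambda>m. if m = 0 then zser else lscal (\<lambda>p. pd vs (v m) p / real m) (lnpow L m)))"
      by (simp add: nabla ladd_def lsub_def lneg_def fun_eq_iff)
  qed
qed

end
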